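(* Let $\{s_n\}_{n\ge1}$ and $\{t_n\}_{n\ge1}$ be sequences of positive real numbers such that: (1) $s_n \geq t_n \geq 2$ for all $n\ge1$; (2) $s_{n+1} \geq s_n+t_n$ for all $n\ge1$; (3) $\lim_{n \to \infty}s_n=\infty$. Then \[ \dim_\mathrm{H}\mathbb{E}(\{s_n\},\{t_n\})=\liminf_{n \to\infty}\frac{\sum_{k=1}^n \log t_k}{\sum_{k=1}^{n+1} \log s_k+\log s_{n+1}-\log t_{n+1}}, \] where \[ \mathbb{E}(\{s_n\},\{t_n\}):=\Big\{x\in(0,1)\setminus\mathbb{Q}: s_{n}<d_{n}(x)\leq s_n+t_n \text{ for all } n\geq1\Big\}. \]
   Context: Engel expansion: define $T:[0,1)\to[0,1)$ by $T(0)=0$ and $T(x)=x\lceil 1/x\rceil-1$ for $x\in(0,1)$, where $\lceil y\rceil$ is the least integer not less than $y$. For irrational $x\in(0,1)$ set $d_1(x)=\lceil 1/x\rceil$ and $d_{n+1}(x)=d_1(T^n(x))$ for $n\ge1$; then $x=\sum_{n\ge1}\frac{1}{d_1(x)\cdots d_n(x)}$, with $2\le d_1(x)\le d_2(x)\le\cdots$ and $d_n(x)\to\infty$. The integers $d_n(x)$ are the digits of the Engel expansion of $x$. $\dim_\mathrm{H}$ denotes Hausdorff dimension. *)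

theory Defs
  imports "HOL-Analysis.Analysis" "HOL-Library.Liminf_Limsup"
begin

definition engel_T :: "real \<Rightarrow> real" where
  "engel_T x = (if x = 0 then 0 else x * of_int \<lceil>1 / x\<rceil> - 1)"

text \<open>Engel digit d_n(x), meaningful for n >= 1: d_1(x) = ceil(1/x), d_(n+1)(x) = d_1(T^n x).\<close>
definition engel_digit :: "nat \<Rightarrow> real \<Rightarrow> int" where
  "engel_digit n x = \<lceil>1 / ((engel_T ^^ (n - 1)) x)\<rceil>"

definition hausdorff_content :: "real \<Rightarrow> real \<Rightarrow> real set \<Rightarrow> ennreal" where
  "hausdorff_content s \<delta> E =
     (INF U \<in> {U :: nat \<Rightarrow> real set. E \<subseteq> (\<Union>i. U i) \<and>
                 (\<forall>i. bounded (U i) \<and> diameter (U i) \<le> \<delta>)}.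
        \<Sum>i. ennreal (diameter (U i) powr s))"

definition hausdorff_measure :: "real \<Rightarrow> real set \<Rightarrow> ennreal" where
  "hausdorff_measure s E = (SUP \<delta> \<in> {0<..}. hausdorff_content s \<delta> E)"

definition hausdorff_dim :: "real set \<Rightarrow> real" where
  "hausdorff_dim E = Inf {s. 0 < s \<and> hausdorff_measure s E = 0}"

definition engel_set :: "(nat \<Rightarrow> real) \<Rightarrow> (nat \<Rightarrow> real) \<Rightarrow> real set" where
  "engel_set s t = {x \<in> {0<..<1} - \<rat>.
      \<forall>n\<ge>1. s n < of_int (engel_digit n x) \<and> of_int (engel_digit n x) \<le> s n + t n}"

end

theory Submission
  imports Defs "HOL-Probability.Probability"
begin

text \<open>
  Every digit sequence \<open>w\<close> with \<open>s\<^sub>n < w\<^sub>n \<le> s\<^sub>n + t\<^sub>n\<close> is the Engel expansion of the point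
  \<open>\<Sum>\<^sub>m 1/(w\<^sub>1\<cdots>w\<^sub>m)\<close>, and these points make up the set. Fixing the first \<open>n\<close> digits confines a
  point to an interval of length about \<open>t\<^sub>n\<^sub>+\<^sub>1/(s\<^sub>1\<cdots>s\<^sub>n s\<^sub>n\<^sub>+\<^sub>1\<^sup>2) = exp (-denom n)\<close>, and there are
  about \<open>t\<^sub>1\<cdots>t\<^sub>n = exp (numer n)\<close> such intervals; covering by them along a subsequence where
  \<open>numer n < \<beta> \<cdot> denom n\<close> gives the upper bound.

  For the lower bound, push the uniform product measure on the digit sets forward to the set and
  use the mass distribution principle. Because \<open>s\<^sub>n\<^sub>+\<^sub>1 \<ge> s\<^sub>n + t\<^sub>n\<close>, two points whose digits first
  differ at place \<open>n + 1\<close> are at distance at least about \<open>1/(2\<^sup>n s\<^sub>1\<cdots>s\<^sub>n\<^sub>+\<^sub>2)\<close>, and a set of diameter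
  \<open>r\<close> meets only about \<open>2\<^sup>n s\<^sub>1\<cdots>s\<^sub>n s\<^sub>n\<^sub>+\<^sub>1\<^sup>2 r + 2\<close> values of the \<open>(n + 1)\<close>-st digit. Counting
  the cylinders shows that such a set carries mass at most \<open>4 r\<^sup>\<alpha>\<close> for every \<open>\<alpha>\<close> below the lower limit.
\<close>

lemma le_powr_interpolate:
  fixes x c y \<alpha> :: real
  assumes "0 \<le> x" "x \<le> c" "x \<le> y" "0 \<le> \<alpha>" "\<alpha> \<le> 1"
  shows "x \<le> c powr (1 - \<alpha>) * y powr \<alpha>"
proof (cases "x = 0")
  case False
  then have "x = x powr (1 - \<alpha>) * x powr \<alpha>" using assms by (simp add: powr_add[symmetric])
  also have "\<dots> \<le> c powr (1 - \<alpha>) * y powr \<alpha>" using assms by (intro mult_mono powr_mono2) auto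
  finally show ?thesis .
qed simp

lemma first_difference:
  fixes X :: "(nat \<Rightarrow> 'a) set"
  assumes "\<forall>w\<in>X. w 0 = c" and "w \<in> X" "v \<in> X" "w \<noteq> v"
  obtains n where "\<forall>w\<in>X. \<forall>v\<in>X. \<forall>k\<in>{1..n}. w k = v k" "\<exists>w\<in>X. \<exists>v\<in>X. w (Suc n) \<noteq> v (Suc n)"
proof -
  let ?differ = "\<lambda>m. \<exists>w\<in>X. \<exists>v\<in>X. w (Suc m) \<noteq> v (Suc m)"
  obtain k where k: "w k \<noteq> v k" using assms(4) by auto
  moreover have "w 0 = v 0" using assms(1)[rule_format, OF assms(2)] assms(1)[rule_format, OF assms(3)] by simp
  ultimately obtain m where "k = Suc m" by (cases k) auto
  with k assms(2,3) have ex: "?differ m" by blast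
  have "\<forall>w\<in>X. \<forall>v\<in>X. \<forall>k\<in>{1..Least ?differ}. w k = v k"
  proof (intro ballI)
    fix w v k assume "w \<in> X" "v \<in> X" "k \<in> {1..Least ?differ}"
    then show "w k = v k" using not_less_Least[of "k - 1" ?differ] by (cases k) auto
  qed
  then show thesis using LeastI[of ?differ, OF ex] that by blast
qed

section \<open>The Engel map and Engel series\<close>

lemma engel_T_eq:
  fixes x :: real
  assumes "x \<noteq> 0"
  shows "x * of_int \<lceil>1 / x\<rceil> = 1 + engel_T x"
  using assms by (simp add: engel_T_def)

lemma engel_T_range:
  fixes x :: real
  assumes "0 < x" "x < 1"
  shows "0 \<le> engel_T x" "engel_T x < 1"
proof -
  have c: "of_int \<lceil>1/x\<rceil> \<ge> 1/x" "of_int \<lceil>1/x\<rceil> < 1/x + 1" by linarith+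
  have "x * of_int \<lceil>1/x\<rceil> \<ge> x * (1/x)" using c assms by (intro mult_left_mono) auto
  then show "0 \<le> engel_T x" using engel_T_eq[of x] assms by simp
  have "x * of_int \<lceil>1/x\<rceil> < x * (1/x + 1)" using c assms by (intro mult_strict_left_mono) auto
  then show "engel_T x < 1" using engel_T_eq[of x] assms by (simp add: algebra_simps)
qed

definition engel_series :: "(nat \<Rightarrow> real) \<Rightarrow> real" where
  "engel_series a = (\<Sum>m. 1 / (\<Prod>j\<le>m. a j))"

lemma engel_series_summable:
  fixes a :: "nat \<Rightarrow> real"
  assumes "\<And>j. a j \<ge> 2"
  shows "summable (\<lambda>m. 1 / (\<Prod>j\<le>m. a j))"
proof -
  have "norm (1 / (\<Prod>j\<le>n. a j)) \<le> (1/2) ^ Suc n" for n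
  proof -
    have "(\<Prod>j\<le>n. (2::real)) \<le> (\<Prod>j\<le>n. a j)" by (rule prod_mono) (simp add: assms)
    then have "2 ^ Suc n \<le> (\<Prod>j\<le>n. a j)" by simp
    moreover have pos: "0 < (\<Prod>j\<le>n. a j)" by (rule prod_pos) (use assms in \<open>smt (verit)\<close>)
    ultimately have "1 / (\<Prod>j\<le>n. a j) \<le> 1 / 2 ^ Suc n"
      by (intro divide_left_mono mult_pos_pos) auto
    then show ?thesis using pos by (simp add: power_one_over)
  qed
  then show ?thesis by (rule summable_comparison_test'[rotated]) simp
qed

lemma engel_series_rec:
  fixes a :: "nat \<Rightarrow> real"
  assumes "\<And>j. a j \<ge> 2"
  shows "engel_series a = (1 + engel_series (\<lambda>m. a (Suc m))) / a 0"
proof -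
  have s1: "summable (\<lambda>m. 1 / (\<Prod>j\<le>m. a j))" by (rule engel_series_summable[OF assms])
  have s2: "summable (\<lambda>m. 1 / (\<Prod>j\<le>m. a (Suc j)))" by (rule engel_series_summable) (use assms in auto)
  have "engel_series a = 1 / (\<Prod>j\<le>0. a j) + (\<Sum>m. 1 / (\<Prod>j\<le>Suc m. a j))"
    unfolding engel_series_def using suminf_split_head[OF s1] by simp
  also have "(\<lambda>m. 1 / (\<Prod>j\<le>Suc m. a j)) = (\<lambda>m. (1 / a 0) * (1 / (\<Prod>j\<le>m. a (Suc j))))"
    by (subst prod.atMost_Suc_shift) simp
  also have "(\<Sum>m. (1 / a 0) * (1 / (\<Prod>j\<le>m. a (Suc j)))) = (1 / a 0) * engel_series (\<lambda>m. a (Suc m))"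
    unfolding engel_series_def by (rule suminf_mult[OF s2])
  finally show ?thesis using assms[of 0] by (simp add: field_simps)
qed

lemma engel_series_pos:
  fixes a :: "nat \<Rightarrow> real"
  assumes "\<And>j. a j \<ge> 2"
  shows "engel_series a > 0"
  unfolding engel_series_def
proof (rule suminf_pos)
  show "summable (\<lambda>m. 1 / (\<Prod>j\<le>m. a j))" by (rule engel_series_summable[OF assms])
  fix n
  have "0 < (\<Prod>j\<le>n. a j)" by (rule prod_pos) (use assms in \<open>smt (verit)\<close>)
  then show "0 < 1 / (\<Prod>j\<le>n. a j)" by simp
qed

lemma engel_series_le:
  fixes a :: "nat \<Rightarrow> real"
  assumes "\<And>j. a j \<ge> 2" "\<And>j. a j \<ge> a 0"
  shows "engel_series a \<le> 1 / (a 0 - 1)"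
proof -
  have a0: "a 0 \<ge> 2" using assms(1) by auto
  have q: "norm (1 / a 0) < 1" using a0 by simp
  have "engel_series a \<le> (\<Sum>m. (1 / a 0) ^ Suc m)"
    unfolding engel_series_def
  proof (rule suminf_le)
    show "summable (\<lambda>m. 1 / (\<Prod>j\<le>m. a j))" by (rule engel_series_summable[OF assms(1)])
    show "summable (\<lambda>m. (1 / a 0) ^ Suc m)" using a0 by simp
    fix m
    have "(\<Prod>j\<le>m. a 0) \<le> (\<Prod>j\<le>m. a j)"
      by (rule prod_mono) (use a0 assms(2) in \<open>smt (verit)\<close>)
    then have le: "a 0 ^ Suc m \<le> (\<Prod>j\<le>m. a j)" by simp
    moreover have "0 < a 0 ^ Suc m" using a0 by simp
    ultimately have "1 / (\<Prod>j\<le>m. a j) \<le> 1 / a 0 ^ Suc m"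
      by (intro divide_left_mono mult_pos_pos) auto
    then show "1 / (\<Prod>j\<le>m. a j) \<le> (1 / a 0) ^ Suc m" by (simp add: power_one_over)
  qed
  also have "(\<Sum>m. (1 / a 0) ^ Suc m) = (1 / a 0) * (\<Sum>m. (1 / a 0) ^ m)"
    by (simp only: power_Suc suminf_mult[OF summable_geometric[OF q]])
  also have "\<dots> = 1 / (a 0 - 1)" using suminf_geometric[OF q] a0 by (simp add: field_simps)
  finally show ?thesis .
qed

primrec engel_numer :: "(nat \<Rightarrow> int) \<Rightarrow> nat \<Rightarrow> int" where
  "engel_numer w 0 = 0"
| "engel_numer w (Suc n) = w (Suc n) * engel_numer w n + 1"

definition engel_denom :: "(nat \<Rightarrow> int) \<Rightarrow> nat \<Rightarrow> int" where
  "engel_denom w n = (\<Prod>k=1..n. w k)"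

lemma engel_denom_Suc: "engel_denom w (Suc n) = engel_denom w n * w (Suc n)"
  unfolding engel_denom_def by (simp add: prod.nat_ivl_Suc' mult.commute)

lemma engel_numer_cong: "(\<And>k. 1 \<le> k \<Longrightarrow> k \<le> n \<Longrightarrow> w k = v k) \<Longrightarrow> engel_numer w n = engel_numer v n"
  by (induction n) auto

lemma engel_denom_cong: "(\<And>k. 1 \<le> k \<Longrightarrow> k \<le> n \<Longrightarrow> w k = v k) \<Longrightarrow> engel_denom w n = engel_denom v n"
  unfolding engel_denom_def by (rule prod.cong) auto

text \<open>If \<open>y\<^sub>k\<close> plays the role of \<open>T\<^sup>k x\<close> with digits \<open>w\<close>, then \<open>x = (engel_numer w n + T\<^sup>n x) / engel_denom w n\<close>.\<close>
lemma engel_denom_mult_eq: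
  fixes y :: "nat \<Rightarrow> real"
  assumes "\<And>k. k < n \<Longrightarrow> y k * of_int (w (Suc k)) = 1 + y (Suc k)"
  shows "of_int (engel_denom w n) * y 0 = of_int (engel_numer w n) + y n"
  using assms
proof (induction n)
  case 0 then show ?case by (simp add: engel_denom_def)
next
  case (Suc n)
  have IH: "of_int (engel_denom w n) * y 0 = of_int (engel_numer w n) + y n" using Suc by simp
  have "of_int (engel_denom w (Suc n)) * y 0 = (of_int (engel_numer w n) + y n) * of_int (w (Suc n))"
    by (simp add: engel_denom_Suc IH[symmetric])
  also have "\<dots> = of_int (engel_numer w (Suc n)) + y (Suc n)"
    using Suc.prems[of n] by (simp add: algebra_simps)
  finally show ?case .
qed

section \<open>Hausdorff measure and dimension\<close>

lemma hausdorff_content_le_finite_cover: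
  fixes U :: "'i \<Rightarrow> real set"
  assumes I: "finite I" and cov: "E \<subseteq> (\<Union>i\<in>I. U i)" and "0 \<le> \<delta>"
    and "\<And>i. i \<in> I \<Longrightarrow> bounded (U i) \<and> diameter (U i) \<le> \<delta>"
  shows "hausdorff_content \<beta> \<delta> E \<le> (\<Sum>i\<in>I. ennreal (diameter (U i) powr \<beta>))"
proof -
  obtain xs where xs: "set xs = I" "distinct xs" using finite_distinct_list[OF I] by blast
  define Z where "Z j = (if j < length xs then U (xs ! j) else {})" for j
  have "E \<subseteq> (\<Union>j. Z j)"
  proof
    fix x assume "x \<in> E"
    then obtain i where i: "i \<in> I" "x \<in> U i" using cov by blast
    then obtain j where "j < length xs" "xs ! j = i" using xs(1) by (metis in_set_conv_nth)
    then show "x \<in> (\<Union>j. Z j)" using i by (auto simp: Z_def)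
  qed
  moreover have "bounded (Z j) \<and> diameter (Z j) \<le> \<delta>" for j
    using assms(3,4) xs(1) by (auto simp: Z_def)
  ultimately have "hausdorff_content \<beta> \<delta> E \<le> (\<Sum>j. ennreal (diameter (Z j) powr \<beta>))"
    unfolding hausdorff_content_def by (intro INF_lower) auto
  also have "\<dots> = (\<Sum>j<length xs. ennreal (diameter (Z j) powr \<beta>))"
    by (rule suminf_finite) (auto simp: Z_def)
  also have "\<dots> = (\<Sum>i\<in>I. ennreal (diameter (U i) powr \<beta>))"
    by (simp add: Z_def xs(1)[symmetric] sum.distinct_set_conv_list[OF xs(2)] sum_list_sum_nth
        atLeast0LessThan)
  finally show ?thesis .
qed

lemma hausdorff_measure_eq_0I:
  fixes E :: "real set"
  assumes covers: "\<And>\<delta> \<epsilon>. \<delta> > 0 \<Longrightarrow> \<epsilon> > 0 \<Longrightarrow> \<exists>I (U :: 'i \<Rightarrow> real set). finite I \<and>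
      E \<subseteq> (\<Union>i\<in>I. U i) \<and> (\<forall>i\<in>I. bounded (U i) \<and> diameter (U i) \<le> \<delta>) \<and>
      (\<Sum>i\<in>I. diameter (U i) powr \<beta>) \<le> \<epsilon>"
  shows "hausdorff_measure \<beta> E = 0"
proof -
  have "hausdorff_content \<beta> \<delta> E \<le> 0" if \<delta>: "\<delta> > 0" for \<delta>
  proof (rule ennreal_le_epsilon)
    fix \<epsilon> :: real assume \<epsilon>: "\<epsilon> > 0"
    obtain I and U :: "'i \<Rightarrow> real set" where "finite I" "E \<subseteq> (\<Union>i\<in>I. U i)"
      "\<forall>i\<in>I. bounded (U i) \<and> diameter (U i) \<le> \<delta>" and sum: "(\<Sum>i\<in>I. diameter (U i) powr \<beta>) \<le> \<epsilon>"
      using covers[OF \<delta> \<epsilon>] by blast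
    then have "hausdorff_content \<beta> \<delta> E \<le> (\<Sum>i\<in>I. ennreal (diameter (U i) powr \<beta>))"
      using \<delta> by (intro hausdorff_content_le_finite_cover) auto
    also have "\<dots> = ennreal (\<Sum>i\<in>I. diameter (U i) powr \<beta>)" by (simp add: sum_ennreal)
    also have "\<dots> \<le> ennreal \<epsilon>" using sum by (rule ennreal_leI)
    finally show "hausdorff_content \<beta> \<delta> E \<le> 0 + ennreal \<epsilon>" by simp
  qed
  then show ?thesis unfolding hausdorff_measure_def by (simp add: SUP_eq_const)
qed

lemma mass_distribution_cover_sum_ge:
  fixes f :: "'a \<Rightarrow> real" and U :: "nat \<Rightarrow> real set"
  assumes M: "prob_space M" and into: "\<And>x. x \<in> space M \<Longrightarrow> f x \<in> E" and "c > 0"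
    and mass: "\<And>U \<eta>. bounded U \<Longrightarrow> diameter U \<le> \<delta> \<Longrightarrow> \<eta> > 0 \<Longrightarrow>
      \<exists>S\<in>sets M. {x \<in> space M. f x \<in> U} \<subseteq> S \<and> emeasure M S \<le> ennreal (c * diameter U powr \<alpha> + \<eta>)"
    and cover: "E \<subseteq> (\<Union>i. U i)" "\<And>i. bounded (U i)" "\<And>i. diameter (U i) \<le> \<delta>"
  shows "ennreal (1 / (2 * c)) \<le> (\<Sum>i. ennreal (diameter (U i) powr \<alpha>))"
proof -
  define \<eta> :: "nat \<Rightarrow> real" where "\<eta> = (\<lambda>i. (1/2) ^ i / 4)"
  have "\<eta> sums (1/2)"
    using sums_mult[OF geometric_sums[of "1/2::real"], of "1/4"] by (simp add: \<eta>_def)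
  then have "(\<Sum>i. ennreal (\<eta> i)) = ennreal (\<Sum>i. \<eta> i)"
    by (intro suminf_ennreal2) (auto simp: \<eta>_def sums_iff)
  also have "(\<Sum>i. \<eta> i) = 1/2" using \<open>\<eta> sums (1/2)\<close> by (rule sums_unique[symmetric])
  finally have \<eta>_sum: "(\<Sum>i. ennreal (\<eta> i)) = ennreal (1/2)" .
  have "\<forall>i. \<exists>S. S \<in> sets M \<and> {x \<in> space M. f x \<in> U i} \<subseteq> S \<and>
      emeasure M S \<le> ennreal (c * diameter (U i) powr \<alpha> + \<eta> i)"
    using mass cover(2,3) by (simp add: \<eta>_def Bex_def)
  then obtain S where "\<forall>i. S i \<in> sets M \<and> {x \<in> space M. f x \<in> U i} \<subseteq> S i \<and>
      emeasure M (S i) \<le> ennreal (c * diameter (U i) powr \<alpha> + \<eta> i)"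
    by (rule choice[THEN exE]) blast
  then have S: "\<And>i. S i \<in> sets M" "\<And>i. {x \<in> space M. f x \<in> U i} \<subseteq> S i"
    "\<And>i. emeasure M (S i) \<le> ennreal (c * diameter (U i) powr \<alpha> + \<eta> i)"
    by blast+
  have "space M \<subseteq> (\<Union>i. S i)" using into cover(1) S(2) by blast
  then have "emeasure M (space M) \<le> emeasure M (\<Union>i. S i)"
    using S(1) by (intro emeasure_mono) auto
  then have "1 \<le> emeasure M (\<Union>i. S i)" using prob_space.emeasure_space_1[OF M] by simp
  also have "\<dots> \<le> (\<Sum>i. emeasure M (S i))"
    using S(1) by (intro emeasure_subadditive_countably) auto
  also have "\<dots> \<le> (\<Sum>i. ennreal c * ennreal (diameter (U i) powr \<alpha>) + ennreal (\<eta> i))"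
    using S(3) \<open>c > 0\<close> by (intro suminf_le summableI) (simp add: ennreal_plus ennreal_mult \<eta>_def)
  also have "\<dots> = ennreal c * (\<Sum>i. ennreal (diameter (U i) powr \<alpha>)) + ennreal (1/2)"
    by (simp add: suminf_add[symmetric] \<eta>_sum)
  finally have le: "1 \<le> ennreal c * (\<Sum>i. ennreal (diameter (U i) powr \<alpha>)) + ennreal (1/2)" .
  show ?thesis
  proof (cases "\<Sum>i. ennreal (diameter (U i) powr \<alpha>)" rule: ennreal_cases)
    case (real x)
    then have "ennreal 1 \<le> ennreal (c * x + 1/2)"
      using le \<open>c > 0\<close> by (simp add: ennreal_plus ennreal_mult)
    then have "1 / (2 * c) \<le> x" using real \<open>c > 0\<close> by (simp add: ennreal_le_iff field_simps)
    then show ?thesis using real by (simp add: ennreal_leI)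
  qed simp
qed

lemma hausdorff_measure_neq_0_by_mass_distribution:
  fixes f :: "'a \<Rightarrow> real"
  assumes M: "prob_space M" and into: "\<And>x. x \<in> space M \<Longrightarrow> f x \<in> E" and "\<delta> > 0" and "c > 0"
    and mass: "\<And>U \<eta>. bounded U \<Longrightarrow> diameter U \<le> \<delta> \<Longrightarrow> \<eta> > 0 \<Longrightarrow>
      \<exists>S\<in>sets M. {x \<in> space M. f x \<in> U} \<subseteq> S \<and> emeasure M S \<le> ennreal (c * diameter U powr \<alpha> + \<eta>)"
  shows "hausdorff_measure \<alpha> E \<noteq> 0"
proof -
  have "ennreal (1 / (2 * c)) \<le> hausdorff_content \<alpha> \<delta> E"
    unfolding hausdorff_content_def
    by (rule INF_greatest) (use mass_distribution_cover_sum_ge[OF M into \<open>c > 0\<close> mass] in blast)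
  also have "hausdorff_content \<alpha> \<delta> E \<le> hausdorff_measure \<alpha> E"
    unfolding hausdorff_measure_def using \<open>\<delta> > 0\<close> by (intro SUP_upper) auto
  finally show ?thesis using \<open>c > 0\<close> by (auto simp: ennreal_eq_0_iff)
qed

lemma hausdorff_dim_eqI:
  assumes "0 \<le> l"
    and null: "\<And>\<beta>. l < \<beta> \<Longrightarrow> hausdorff_measure \<beta> E = 0"
    and nonnull: "\<And>\<beta>. 0 < \<beta> \<Longrightarrow> \<beta> < l \<Longrightarrow> hausdorff_measure \<beta> E \<noteq> 0"
  shows "hausdorff_dim E = l"
proof -
  define S where "S = {\<beta>. 0 < \<beta> \<and> hausdorff_measure \<beta> E = 0}"
  have inS: "\<beta> \<in> S" if "l < \<beta>" for \<beta> using that assms(1) null by (simp add: S_def)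
  have "l \<le> \<beta>" if "\<beta> \<in> S" for \<beta> using that nonnull by (force simp: S_def)
  then have "l \<le> Inf S" using inS[of "l + 1"] by (intro cInf_greatest) auto
  moreover have "Inf S \<le> l"
  proof (rule field_le_epsilon)
    fix e :: real assume "0 < e"
    have "bdd_below S" unfolding S_def by (rule bdd_belowI[of _ 0]) auto
    then show "Inf S \<le> l + e" using inS \<open>0 < e\<close> by (intro cInf_lower) auto
  qed
  ultimately show ?thesis unfolding hausdorff_dim_def S_def by simp
qed

section \<open>Admissible digit sequences\<close>

locale engel_growth =
  fixes s t :: "nat \<Rightarrow> real"
  assumes bounds: "\<forall>n\<ge>1. s n \<ge> t n \<and> t n \<ge> 2"
    and growth: "\<forall>n\<ge>1. s (n + 1) \<ge> s n + t n"
    and s_at_top: "filterlim s at_top sequentially"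
begin

lemma t_ge_2: "1 \<le> n \<Longrightarrow> t n \<ge> 2" using bounds by auto
lemma t_le_s: "1 \<le> n \<Longrightarrow> t n \<le> s n" using bounds by auto
lemma s_ge_2: "1 \<le> n \<Longrightarrow> s n \<ge> 2" using bounds by force
lemma s_Suc_ge: "1 \<le> n \<Longrightarrow> s (Suc n) \<ge> s n + t n" using growth by auto
lemma s_pos: "1 \<le> n \<Longrightarrow> s n > 0" using s_ge_2[of n] by linarith
lemma t_pos: "1 \<le> n \<Longrightarrow> t n > 0" using t_ge_2[of n] by linarith

definition digits :: "nat \<Rightarrow> int set" where
  "digits n = {\<lfloor>s n\<rfloor> + 1 .. \<lfloor>s n + t n\<rfloor>}"

lemma mem_digits_iff: "d \<in> digits n \<longleftrightarrow> s n < of_int d \<and> of_int d \<le> s n + t n"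
  unfolding digits_def by (simp add: floor_less_iff le_floor_iff) linarith

lemma finite_digits [simp]: "finite (digits n)"
  by (simp add: digits_def)

lemma card_digits_bounds:
  assumes "1 \<le> n"
  shows "t n - 1 < real (card (digits n))" "real (card (digits n)) < t n + 1"
proof -
  have "of_int \<lfloor>s n + t n\<rfloor> > s n + t n - 1" "of_int \<lfloor>s n + t n\<rfloor> \<le> s n + t n"
    "of_int \<lfloor>s n\<rfloor> > s n - 1" "of_int \<lfloor>s n\<rfloor> \<le> s n" by linarith+
  moreover have "\<lfloor>s n + t n\<rfloor> - \<lfloor>s n\<rfloor> \<ge> 0" using calculation t_ge_2[OF assms] by linarith
  then have "real (card (digits n)) = of_int (\<lfloor>s n + t n\<rfloor> - \<lfloor>s n\<rfloor>)"
    by (simp add: digits_def)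
  ultimately show "t n - 1 < real (card (digits n))" "real (card (digits n)) < t n + 1"
    by linarith+
qed

lemma card_digits_ge_2: "1 \<le> n \<Longrightarrow> card (digits n) \<ge> 2"
  using card_digits_bounds(1)[of n] t_ge_2[of n] by linarith

lemma digits_nonempty: "1 \<le> n \<Longrightarrow> digits n \<noteq> {}"
  using card_digits_ge_2[of n] by auto

lemma digits_ge_3: "1 \<le> n \<Longrightarrow> d \<in> digits n \<Longrightarrow> d \<ge> 3"
  using s_ge_2[of n] by (simp add: mem_digits_iff)

lemma digits_le: "1 \<le> n \<Longrightarrow> d \<in> digits n \<Longrightarrow> of_int d \<le> 2 * s n"
  using t_le_s[of n] by (simp add: mem_digits_iff)

lemma digits_gt: "d \<in> digits n \<Longrightarrow> of_int d > s n"
  by (simp add: mem_digits_iff)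

lemma digits_Suc_gt: "1 \<le> n \<Longrightarrow> d \<in> digits n \<Longrightarrow> d' \<in> digits (Suc n) \<Longrightarrow> d + 1 \<le> d'"
  using s_Suc_ge[of n] by (simp add: mem_digits_iff)

definition admissible :: "(nat \<Rightarrow> int) set" where
  "admissible = {w. \<forall>n\<ge>1. w n \<in> digits n}"

lemma admissible_mono:
  assumes w: "w \<in> admissible" and i: "1 \<le> i" and ij: "i \<le> j"
  shows "w i \<le> w j"
  using ij
proof (induction j rule: dec_induct)
  case base then show ?case by simp
next
  case (step n)
  have "w n + 1 \<le> w (Suc n)" using w i step.hyps
    by (intro digits_Suc_gt[of n]) (auto simp: admissible_def)
  then show ?case using step by simp
qed

lemma admissible_Suc: "w \<in> admissible \<Longrightarrow> 1 \<le> i \<Longrightarrow> w i + 1 \<le> w (Suc i)"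
  by (intro digits_Suc_gt) (auto simp: admissible_def)

lemma admissible_ge_3: "w \<in> admissible \<Longrightarrow> 1 \<le> i \<Longrightarrow> w i \<ge> 3"
  by (intro digits_ge_3) (auto simp: admissible_def)

definition tail :: "(nat \<Rightarrow> int) \<Rightarrow> nat \<Rightarrow> real" where
  "tail w k = engel_series (\<lambda>m. of_int (w (k + 1 + m)))"

definition engel_value :: "(nat \<Rightarrow> int) \<Rightarrow> real" where
  "engel_value w = tail w 0"

lemma tail_digit_ge_2: "w \<in> admissible \<Longrightarrow> (of_int (w (k + 1 + j)) :: real) \<ge> 2"
  using admissible_ge_3[of w "k+1+j"] by simp

lemma tail_rec: "w \<in> admissible \<Longrightarrow> tail w k * of_int (w (Suc k)) = 1 + tail w (Suc k)"
proof -
  assume w: "w \<in> admissible"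
  have "tail w k = (1 + engel_series (\<lambda>m. of_int (w (k + 1 + Suc m)))) / of_int (w (k + 1 + 0))"
    unfolding tail_def by (rule engel_series_rec) (rule tail_digit_ge_2[OF w])
  moreover have "(\<lambda>m. of_int (w (k + 1 + Suc m)) :: real) = (\<lambda>m. of_int (w (Suc k + 1 + m)))"
    by simp
  moreover have "(of_int (w (Suc k)) :: real) \<noteq> 0" using admissible_ge_3[OF w, of "Suc k"] by simp
  ultimately show ?thesis by (simp add: tail_def)
qed

lemma tail_pos: "w \<in> admissible \<Longrightarrow> tail w k > 0"
  unfolding tail_def by (rule engel_series_pos) (rule tail_digit_ge_2)

lemma tail_le: "w \<in> admissible \<Longrightarrow> tail w k \<le> 1 / (of_int (w (Suc k)) - 1)"
proof -
  assume w: "w \<in> admissible"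
  have "tail w k \<le> 1 / (of_int (w (k + 1 + 0)) - 1)"
    unfolding tail_def
  proof (rule engel_series_le)
    show "2 \<le> (of_int (w (k + 1 + j)) :: real)" for j by (rule tail_digit_ge_2[OF w])
    show "(of_int (w (k + 1 + 0)) :: real) \<le> of_int (w (k + 1 + j))" for j
      using admissible_mono[OF w, of "k+1+0" "k+1+j"] by simp
  qed
  then show ?thesis by simp
qed

lemma tail_gt: "w \<in> admissible \<Longrightarrow> tail w k > 1 / of_int (w (Suc k))"
proof -
  assume w: "w \<in> admissible"
  have a: "(of_int (w (Suc k)) :: real) \<ge> 3" using admissible_ge_3[OF w, of "Suc k"] by simp
  have "tail w k * of_int (w (Suc k)) > 1" using tail_rec[OF w, of k] tail_pos[OF w, of "Suc k"] by simp
  then show ?thesis using a by (simp add: divide_simps)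
qed

lemma tail_le_sq: "w \<in> admissible \<Longrightarrow> tail w k \<le> (of_int (w (Suc k)) + 1) / (of_int (w (Suc k)))^2"
proof -
  assume w: "w \<in> admissible"
  define a where "a = (of_int (w (Suc k)) :: real)"
  define b where "b = (of_int (w (Suc (Suc k))) :: real)"
  have a3: "a \<ge> 3" using admissible_ge_3[OF w, of "Suc k"] by (simp add: a_def)
  have ab: "a + 1 \<le> b" using admissible_Suc[OF w, of "Suc k"] by (simp add: a_def b_def)
  have u: "tail w (Suc k) \<le> 1 / (b - 1)" using tail_le[OF w, of "Suc k"] by (simp add: b_def)
  have "1 / (b - 1) \<le> 1 / a" using ab a3 by (intro divide_left_mono) auto
  with u have u2: "tail w (Suc k) \<le> 1 / a" by linarith
  have r: "tail w k * a = 1 + tail w (Suc k)" using tail_rec[OF w, of k] by (simp add: a_def)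
  have "tail w k * a \<le> 1 + 1 / a" using r u2 by linarith
  then have "tail w k \<le> (1 + 1/a) / a" using a3 by (simp add: divide_simps)
  also have "(1 + 1/a) / a = (a + 1) / a^2" using a3 by (simp add: field_simps power2_eq_square)
  finally show ?thesis by (simp add: a_def)
qed

lemma tail_less: "w \<in> admissible \<Longrightarrow> tail w k < 1 / (of_int (w (Suc k)) - 1)"
proof -
  assume w: "w \<in> admissible"
  define a where "a = (of_int (w (Suc k)) :: real)"
  have a3: "a \<ge> 3" using admissible_ge_3[OF w, of "Suc k"] by (simp add: a_def)
  have "(a + 1) / a^2 < 1 / (a - 1)"
    using a3 by (simp add: divide_simps power2_eq_square) (simp add: algebra_simps)
  then show ?thesis using tail_le_sq[OF w, of k] by (simp add: a_def)
qed

lemma tail_less_1: "w \<in> admissible \<Longrightarrow> tail w k < 1"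
proof -
  assume w: "w \<in> admissible"
  have a: "(of_int (w (Suc k)) :: real) \<ge> 3" using admissible_ge_3[OF w, of "Suc k"] by simp
  have "1 / (of_int (w (Suc k)) - 1) \<le> (1::real) / 2" using a by (intro divide_left_mono) auto
  then show ?thesis using tail_less[OF w, of k] by linarith
qed

lemma ceiling_inverse_tail: "w \<in> admissible \<Longrightarrow> \<lceil>1 / tail w k\<rceil> = w (Suc k)"
proof -
  assume w: "w \<in> admissible"
  define a where "a = (of_int (w (Suc k)) :: real)"
  have a3: "a \<ge> 3" using admissible_ge_3[OF w, of "Suc k"] by (simp add: a_def)
  have p: "tail w k > 0" by (rule tail_pos[OF w])
  have l: "tail w k > 1 / a" using tail_gt[OF w, of k] by (simp add: a_def)
  have u: "tail w k < 1 / (a - 1)" using tail_less[OF w, of k] by (simp add: a_def)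
  have "1 / tail w k < a" using l p a3 by (simp add: divide_simps mult.commute)
  moreover have "1 / tail w k > a - 1" using u p a3 by (simp add: divide_simps mult.commute)
  ultimately show ?thesis by (intro ceiling_unique) (auto simp: a_def)
qed

lemma engel_T_tail: "w \<in> admissible \<Longrightarrow> engel_T (tail w k) = tail w (Suc k)"
proof -
  assume w: "w \<in> admissible"
  have "tail w k \<noteq> 0" using tail_pos[OF w, of k] by simp
  then have "engel_T (tail w k) = tail w k * of_int (w (Suc k)) - 1"
    by (simp add: engel_T_def ceiling_inverse_tail[OF w])
  then show ?thesis using tail_rec[OF w, of k] by simp
qed

lemma funpow_engel_T_value: "w \<in> admissible \<Longrightarrow> (engel_T ^^ k) (engel_value w) = tail w k"
  by (induction k) (simp_all add: engel_value_def engel_T_tail)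

lemma engel_digit_value: "w \<in> admissible \<Longrightarrow> 1 \<le> n \<Longrightarrow> engel_digit n (engel_value w) = w n"
proof -
  assume w: "w \<in> admissible" and n: "1 \<le> n"
  then obtain k where k: "n = Suc k" by (cases n) auto
  show ?thesis
    unfolding engel_digit_def k using ceiling_inverse_tail[OF w, of k] funpow_engel_T_value[OF w, of k] by simp
qed

lemma engel_denom_mult_value:
  "w \<in> admissible \<Longrightarrow> of_int (engel_denom w n) * engel_value w = of_int (engel_numer w n) + tail w n"
  using engel_denom_mult_eq[of n "tail w" w] tail_rec[of w] by (simp add: engel_value_def)

lemma s_exceeds: "\<exists>n. s (Suc n) \<ge> B"
proof -
  obtain N where "\<forall>n\<ge>N. s n \<ge> B"
    using s_at_top unfolding filterlim_at_top eventually_sequentially by blast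
  then show ?thesis by (metis le_SucI order_refl)
qed

text \<open>A rational value \<open>p/q\<close> would make \<open>q \<cdot> T\<^sup>n x\<close> an integer in \<open>(0, 1)\<close> once \<open>w\<^sub>n\<^sub>+\<^sub>1 > q + 2\<close>.\<close>
lemma engel_value_notin_Rats:
  assumes w: "w \<in> admissible"
  shows "engel_value w \<notin> \<rat>"
proof
  assume "engel_value w \<in> \<rat>"
  then obtain p :: int and q :: nat where q: "q > 0" and pq: "engel_value w = of_int p / real q"
    unfolding Rats_eq_int_div_nat by auto
  obtain n where sn: "s (Suc n) \<ge> real q + 2" using s_exceeds by blast
  have a: "(of_int (w (Suc n)) :: real) > real q + 2"
    using digits_gt[of "w (Suc n)" "Suc n"] w sn by (auto simp: admissible_def)
  have "real q * tail w n = of_int (engel_denom w n * p - int q * engel_numer w n)"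
    using engel_denom_mult_value[OF w, of n] q unfolding pq by (simp add: field_simps)
  then obtain z :: int where z: "real q * tail w n = of_int z" by blast
  have "real q * tail w n > 0" using q tail_pos[OF w, of n] by simp
  moreover have "real q * tail w n < 1"
  proof -
    have "tail w n < 1 / (of_int (w (Suc n)) - 1)" by (rule tail_less[OF w])
    also have "\<dots> \<le> 1 / (real q + 1)" using a by (intro divide_left_mono) auto
    finally have "real q * tail w n < real q * (1 / (real q + 1))"
      using q by (intro mult_strict_left_mono) auto
    also have "\<dots> < 1" by (simp add: field_simps)
    finally show ?thesis .
  qed
  ultimately have "0 < z" "z < 1" unfolding z by simp_all
  then show False by simp
qed

lemma engel_value_in_engel_set:
  assumes w: "w \<in> admissible"
  shows "engel_value w \<in> engel_set s t"
proof -
  have "0 < engel_value w" "engel_value w < 1"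
    using tail_pos[OF w, of 0] tail_less_1[OF w, of 0] by (simp_all add: engel_value_def)
  moreover have "\<forall>n\<ge>1. engel_digit n (engel_value w) \<in> digits n"
    using w by (simp add: engel_digit_value admissible_def)
  ultimately show ?thesis
    using engel_value_notin_Rats[OF w] unfolding engel_set_def mem_digits_iff by auto
qed

lemma engel_digit_mem_digits: "x \<in> engel_set s t \<Longrightarrow> 1 \<le> n \<Longrightarrow> engel_digit n x \<in> digits n"
  by (auto simp: engel_set_def mem_digits_iff)

lemma funpow_engel_T_range:
  assumes x: "x \<in> engel_set s t"
  shows "0 < (engel_T ^^ k) x \<and> (engel_T ^^ k) x < 1"
proof (induction k)
  case 0 then show ?case using x by (auto simp: engel_set_def)
next
  case (Suc k)
  let ?y = "(engel_T ^^ k) x"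
  have nn: "0 \<le> engel_T ?y" "engel_T ?y < 1" using engel_T_range[of ?y] Suc by auto
  have d: "engel_digit (Suc (Suc k)) x \<in> digits (Suc (Suc k))" by (rule engel_digit_mem_digits[OF x]) simp
  have "engel_T ?y \<noteq> 0"
  proof
    assume z: "engel_T ?y = 0"
    have "engel_digit (Suc (Suc k)) x = \<lceil>1 / engel_T ?y\<rceil>" by (simp add: engel_digit_def)
    also have "\<dots> = 0" using z by simp
    finally have "engel_digit (Suc (Suc k)) x = 0" .
    then show False using d digits_ge_3[of "Suc (Suc k)" 0] by simp
  qed
  then show ?case using nn by simp
qed

lemma funpow_engel_T_mult_digit:
  assumes x: "x \<in> engel_set s t"
  shows "(engel_T ^^ k) x * of_int (engel_digit (Suc k) x) = 1 + (engel_T ^^ (Suc k)) x"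
  using engel_T_eq[of "(engel_T ^^ k) x"] funpow_engel_T_range[OF x, of k] by (simp add: engel_digit_def)

lemma engel_denom_mult_point:
  assumes x: "x \<in> engel_set s t"
  shows "of_int (engel_denom (\<lambda>k. engel_digit k x) n) * x
    = of_int (engel_numer (\<lambda>k. engel_digit k x) n) + (engel_T ^^ n) x"
  using engel_denom_mult_eq[of n "\<lambda>k. (engel_T ^^ k) x" "\<lambda>k. engel_digit k x"]
    funpow_engel_T_mult_digit[OF x] by simp

lemma funpow_engel_T_bounds:
  assumes x: "x \<in> engel_set s t"
  shows "1 / (s (Suc n) + t (Suc n)) \<le> (engel_T ^^ n) x" "(engel_T ^^ n) x < 1 / (s (Suc n) - 1)"
proof -
  let ?y = "(engel_T ^^ n) x"
  let ?d = "engel_digit (Suc n) x"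
  have y: "0 < ?y" "?y < 1" using funpow_engel_T_range[OF x] by auto
  have dd: "?d = \<lceil>1 / ?y\<rceil>" by (simp add: engel_digit_def)
  have dC: "?d \<in> digits (Suc n)" by (rule engel_digit_mem_digits[OF x]) simp
  have d1: "of_int ?d > s (Suc n)" "of_int ?d \<le> s (Suc n) + t (Suc n)" using dC by (auto simp: mem_digits_iff)
  have sp: "s (Suc n) \<ge> 2" using s_ge_2 by simp
  have "of_int ?d \<ge> 1 / ?y" unfolding dd by linarith
  moreover have "real_of_int ?d > 0" using d1 sp by linarith
  ultimately have "1 / real_of_int ?d \<le> ?y" using y by (simp add: divide_le_eq mult.commute)
  moreover have "1 / (s (Suc n) + t (Suc n)) \<le> 1 / real_of_int ?d"
    using d1 sp by (intro divide_left_mono) auto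
  ultimately show "1 / (s (Suc n) + t (Suc n)) \<le> ?y" by linarith
  have "real_of_int \<lceil>1 / ?y\<rceil> < 1 / ?y + 1" by linarith
  then have "of_int ?d - 1 < 1 / ?y" using dd by simp
  then have "s (Suc n) - 1 < 1 / ?y" using d1 by linarith
  then have "?y * (s (Suc n) - 1) < 1" using y by (simp add: field_simps)
  then show "?y < 1 / (s (Suc n) - 1)" using sp by (simp add: field_simps)
qed


definition sprod :: "nat \<Rightarrow> real" where
  "sprod n = (\<Prod>k=1..n. s k)"

definition nwords :: "nat \<Rightarrow> real" where
  "nwords n = (\<Prod>k=1..n. real (card (digits k)))"

definition numer :: "nat \<Rightarrow> real" where
  "numer n = (\<Sum>k=1..n. ln (t k))"

definition denom :: "nat \<Rightarrow> real" where
  "denom n = (\<Sum>k=1..n+1. ln (s k)) + ln (s (n + 1)) - ln (t (n + 1))"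

lemma sprod_pos: "sprod n > 0"
  unfolding sprod_def by (rule prod_pos) (simp add: s_pos)

lemma sprod_Suc: "sprod (Suc n) = sprod n * s (Suc n)"
  unfolding sprod_def by (simp add: prod.nat_ivl_Suc' mult.commute)

lemma ln_sprod: "ln (sprod n) = (\<Sum>k=1..n. ln (s k))"
  unfolding sprod_def by (rule ln_prod) (use s_pos in force)+

lemma ln_sprod_nonneg: "ln (sprod n) \<ge> 0"
  unfolding ln_sprod by (rule sum_nonneg) (use s_ge_2 in force)

lemma nwords_pos: "nwords n > 0"
  unfolding nwords_def by (rule prod_pos) (use card_digits_ge_2 in force)

lemma nwords_Suc: "nwords (Suc n) = nwords n * real (card (digits (Suc n)))"
  unfolding nwords_def by (simp add: prod.nat_ivl_Suc' mult.commute)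

lemma nwords_ge_pow_2: "nwords n \<ge> 2 ^ n"
proof -
  have "(\<Prod>k=1..n. 2::real) \<le> nwords n"
    unfolding nwords_def by (rule prod_mono) (use card_digits_ge_2 in force)
  then show ?thesis by simp
qed

lemma ln_card_digits_bounds:
  assumes "1 \<le> n"
  shows "ln (t n) - ln 2 \<le> ln (real (card (digits n)))" "ln (real (card (digits n))) \<le> ln (t n) + ln 2"
proof -
  have t: "t n > 0" using t_pos[OF assms] .
  have "t n / 2 \<le> real (card (digits n))" "real (card (digits n)) \<le> 2 * t n"
    using card_digits_bounds[OF assms] t_ge_2[OF assms] by linarith+
  then have "ln (t n / 2) \<le> ln (real (card (digits n)))" "ln (real (card (digits n))) \<le> ln (2 * t n)"
    using t by (subst ln_le_cancel_iff; simp)+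
  then show "ln (t n) - ln 2 \<le> ln (real (card (digits n)))" "ln (real (card (digits n))) \<le> ln (t n) + ln 2"
    using t by (simp_all add: ln_div ln_mult)
qed

lemma ln_nwords_bounds: "numer n - n * ln 2 \<le> ln (nwords n)" "ln (nwords n) \<le> numer n + n * ln 2"
proof -
  have eq: "ln (nwords n) = (\<Sum>k=1..n. ln (real (card (digits k))))"
    unfolding nwords_def by (rule ln_prod) (use card_digits_ge_2 in force)+
  show "numer n - n * ln 2 \<le> ln (nwords n)"
    unfolding eq numer_def using sum_mono[of "{1..n}" "\<lambda>k. ln (t k) - ln 2"] ln_card_digits_bounds(1)
    by (simp add: sum_subtractf)
  show "ln (nwords n) \<le> numer n + n * ln 2"
    unfolding eq numer_def using sum_mono[of "{1..n}" _ "\<lambda>k. ln (t k) + ln 2"] ln_card_digits_bounds(2)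
    by (simp add: sum.distrib)
qed

lemma denom_eq: "denom n = ln (sprod n) + 2 * ln (s (Suc n)) - ln (t (Suc n))"
  unfolding denom_def ln_sprod by (simp add: sum.nat_ivl_Suc')

lemma ln_sprod_Suc_le_denom: "ln (sprod (Suc n)) \<le> denom n"
  using denom_eq[of n] t_le_s[of "Suc n"] t_pos[of "Suc n"] sprod_pos[of n] s_pos[of "Suc n"]
  by (simp add: sprod_Suc ln_mult)

lemma denom_pos: "denom n > 0"
proof -
  have "0 < ln (s (Suc n))" using s_ge_2[of "Suc n"] by simp
  also have "\<dots> \<le> ln (sprod (Suc n))"
    using ln_sprod_nonneg[of n] sprod_pos[of n] s_pos[of "Suc n"] by (simp add: sprod_Suc ln_mult)
  finally show ?thesis using ln_sprod_Suc_le_denom[of n] by linarith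
qed

lemma numer_nonneg: "numer n \<ge> 0"
  unfolding numer_def by (rule sum_nonneg) (use t_ge_2 in force)

lemma numer_le_denom: "numer n \<le> denom n"
proof -
  have "numer n \<le> ln (sprod n)"
    unfolding numer_def ln_sprod by (rule sum_mono) (use t_le_s t_pos in force)
  also have "\<dots> \<le> ln (sprod (Suc n))"
    using sprod_pos[of n] s_ge_2[of "Suc n"] by (simp add: sprod_Suc ln_mult)
  finally show ?thesis using ln_sprod_Suc_le_denom[of n] by linarith
qed

text \<open>Since \<open>s\<^sub>k \<rightarrow> \<infinity>\<close>, \<open>denom n \<ge> \<Sum>\<^sub>k\<^sub>\<le>\<^sub>n\<^sub>+\<^sub>1 ln s\<^sub>k\<close> grows faster than any multiple of \<open>n\<close>.\<close>
lemma eventually_denom_ge: "eventually (\<lambda>n. c * real n \<le> denom n) sequentially"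
proof -
  define B where "B = max c 1"
  obtain K0 where K0: "\<And>k. k \<ge> K0 \<Longrightarrow> s k \<ge> exp (2 * B)"
    using s_at_top unfolding filterlim_at_top eventually_sequentially by blast
  define K where "K = max K0 1"
  have "B * real n \<le> denom n" if n: "n \<ge> 2 * K" for n
  proof -
    have "(\<Sum>k=K..Suc n. 2 * B) \<le> (\<Sum>k=K..Suc n. ln (s k))"
    proof (rule sum_mono)
      fix k assume "k \<in> {K..Suc n}"
      then have "s k \<ge> exp (2 * B)" using K0 by (auto simp: K_def)
      then show "2 * B \<le> ln (s k)" by (metis exp_gt_zero exp_le_cancel_iff exp_ln order_less_le_trans)
    qed
    also have "\<dots> \<le> (\<Sum>k=1..Suc n. ln (s k))"
      using s_ge_2 by (intro sum_mono2) (auto simp: K_def intro!: ln_ge_zero order_trans[OF one_le_numeral])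
    also have "\<dots> \<le> denom n" using ln_sprod_Suc_le_denom[of n] by (simp add: ln_sprod)
    finally have "real (Suc (Suc n) - K) * (2 * B) \<le> denom n" by simp
    moreover have "real n / 2 \<le> real (Suc (Suc n) - K)" using n by linarith
    then have "(real n / 2) * (2 * B) \<le> real (Suc (Suc n) - K) * (2 * B)"
      by (intro mult_right_mono) (auto simp: B_def)
    ultimately show ?thesis by (simp add: mult.commute)
  qed
  moreover have "c * real n \<le> B * real n" for n by (simp add: B_def mult_right_mono)
  ultimately show ?thesis unfolding eventually_sequentially by (meson order_trans)
qed

section \<open>Covering by rank intervals\<close>

definition words :: "nat \<Rightarrow> (nat \<Rightarrow> int) set" where
  "words n = PiE {1..n} digits"

definition rank_interval :: "nat \<Rightarrow> (nat \<Rightarrow> int) \<Rightarrow> real set" where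
  "rank_interval n w =
     {(of_int (engel_numer w n) + 1 / (s (Suc n) + t (Suc n))) / of_int (engel_denom w n) ..
      (of_int (engel_numer w n) + 1 / (s (Suc n) - 1)) / of_int (engel_denom w n)}"

lemma finite_words: "finite (words n)"
  unfolding words_def by (intro finite_PiE) auto

lemma card_words: "real (card (words n)) = nwords n"
  unfolding words_def nwords_def by (simp add: card_PiE)

lemma engel_denom_ge_sprod:
  assumes "w \<in> words n"
  shows "of_int (engel_denom w n) \<ge> sprod n"
  unfolding sprod_def engel_denom_def of_int_prod
proof (rule prod_mono)
  fix k assume k: "k \<in> {1..n}"
  then have "w k \<in> digits k" using assms by (auto simp: words_def)
  then have "s k < of_int (w k)" by (rule digits_gt)
  then show "0 \<le> s k \<and> s k \<le> of_int (w k)" using s_pos[of k] k by auto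
qed

lemma engel_set_subset_rank_intervals: "engel_set s t \<subseteq> (\<Union>w\<in>words n. rank_interval n w)"
proof
  fix x assume x: "x \<in> engel_set s t"
  define w where "w = restrict (\<lambda>k. engel_digit k x) {1..n}"
  have w: "w \<in> words n" using engel_digit_mem_digits[OF x] by (auto simp: words_def w_def)
  have agree: "\<And>k. 1 \<le> k \<Longrightarrow> k \<le> n \<Longrightarrow> w k = engel_digit k x" by (simp add: w_def)
  have D: "(of_int (engel_denom w n) :: real) > 0"
    using engel_denom_ge_sprod[OF w] sprod_pos[of n] by linarith
  have x_eq: "x = (of_int (engel_numer w n) + (engel_T ^^ n) x) / of_int (engel_denom w n)"
    using engel_denom_mult_point[OF x, of n] D
    by (simp add: engel_numer_cong[OF agree] engel_denom_cong[OF agree] field_simps)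
  have "(of_int (engel_numer w n) + 1 / (s (Suc n) + t (Suc n))) / of_int (engel_denom w n)
      \<le> (of_int (engel_numer w n) + (engel_T ^^ n) x) / of_int (engel_denom w n)"
    "(of_int (engel_numer w n) + (engel_T ^^ n) x) / of_int (engel_denom w n)
      \<le> (of_int (engel_numer w n) + 1 / (s (Suc n) - 1)) / of_int (engel_denom w n)"
    using funpow_engel_T_bounds[OF x, of n] D by (auto intro!: divide_right_mono)
  then have "x \<in> rank_interval n w" using x_eq by (simp add: rank_interval_def)
  then show "x \<in> (\<Union>w\<in>words n. rank_interval n w)" using w by blast
qed

lemma exp_neg_denom: "exp (- denom n) = t (Suc n) / (sprod n * s (Suc n)^2)"
proof -
  have p: "sprod n > 0" "s (Suc n) > 0" "t (Suc n) > 0" using sprod_pos s_pos t_pos by auto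
  then have "- denom n = ln (t (Suc n)) - ln (sprod n * s (Suc n)^2)"
    unfolding denom_eq by (simp add: ln_mult ln_realpow)
  then show ?thesis using p by (simp add: exp_diff)
qed

lemma diameter_rank_interval_le:
  assumes w: "w \<in> words n"
  shows "diameter (rank_interval n w) \<le> 3 * exp (- denom n)"
proof -
  define a b where "a = s (Suc n)" and "b = t (Suc n)"
  define D where "D = (of_int (engel_denom w n) :: real)"
  have a2: "a \<ge> 2" and b2: "b \<ge> 2" using s_ge_2 t_ge_2 by (auto simp: a_def b_def)
  have D: "D \<ge> sprod n" "sprod n > 0" using engel_denom_ge_sprod[OF w] sprod_pos by (auto simp: D_def)
  have "1 / (a - 1) - 1 / (a + b) = (b + 1) / ((a - 1) * (a + b))" using a2 b2 by (simp add: field_simps)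
  also have "\<dots> \<le> (b + 1) / ((a / 2) * a)"
    using a2 b2 by (intro divide_left_mono mult_mono mult_pos_pos) auto
  also have "\<dots> \<le> 3 * b / a^2" using a2 b2 by (simp add: field_simps power2_eq_square)
  finally have gap: "1 / (a - 1) - 1 / (a + b) \<le> 3 * b / a^2" .
  define r where "r = (of_int (engel_numer w n) :: real)"
  have "1 / (a + b) \<le> 1 / (a - 1)" using a2 b2 by (intro divide_left_mono) auto
  then have "(r + 1 / (a + b)) / D \<le> (r + 1 / (a - 1)) / D" using D by (intro divide_right_mono) auto
  then have "diameter (rank_interval n w) = (r + 1 / (a - 1)) / D - (r + 1 / (a + b)) / D"
    unfolding rank_interval_def diameter_closed_interval a_def[symmetric] b_def[symmetric]
      D_def[symmetric] r_def[symmetric] by simp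
  also have "\<dots> = (1 / (a - 1) - 1 / (a + b)) / D"
    by (simp only: diff_divide_distrib[symmetric]) simp
  also have "\<dots> \<le> (3 * b / a^2) / D" using gap D by (intro divide_right_mono) auto
  also have "\<dots> \<le> (3 * b / a^2) / sprod n" using D b2 by (intro divide_left_mono) auto
  also have "\<dots> = 3 * exp (- denom n)" unfolding exp_neg_denom a_def b_def by (simp add: field_simps)
  finally show ?thesis .
qed

lemma rank_intervals_powr_sum_le:
  assumes "\<beta> \<ge> 0"
  shows "(\<Sum>w\<in>words n. diameter (rank_interval n w) powr \<beta>)
    \<le> 3 powr \<beta> * exp (numer n + n * ln 2 - \<beta> * denom n)"
proof -
  have "(\<Sum>w\<in>words n. diameter (rank_interval n w) powr \<beta>) \<le> (\<Sum>w\<in>words n. (3 * exp (- denom n)) powr \<beta>)"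
    using diameter_rank_interval_le assms
    by (intro sum_mono powr_mono2) (auto simp: rank_interval_def diameter_ge_0)
  also have "(3 * exp (- denom n)) powr \<beta> = 3 powr \<beta> * exp (- (\<beta> * denom n))"
    by (simp add: powr_mult) (simp add: powr_def)
  also have "(\<Sum>w\<in>words n. 3 powr \<beta> * exp (- (\<beta> * denom n)))
      = nwords n * (3 powr \<beta> * exp (- (\<beta> * denom n)))"
    by (simp add: card_words)
  also have "\<dots> \<le> exp (numer n + n * ln 2) * (3 powr \<beta> * exp (- (\<beta> * denom n)))"
    using ln_nwords_bounds(2)[of n] nwords_pos[of n]
    by (intro mult_right_mono) (metis exp_le_cancel_iff exp_ln, simp)
  also have "\<dots> = 3 powr \<beta> * exp (numer n + n * ln 2 - \<beta> * denom n)"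
    by (simp add: exp_diff exp_minus field_simps)
  finally show ?thesis .
qed

lemma hausdorff_measure_engel_set_eq_0:
  assumes "\<beta>' < \<beta>" "0 < \<beta>" and often: "frequently (\<lambda>n. numer n < \<beta>' * denom n) sequentially"
  shows "hausdorff_measure \<beta> (engel_set s t) = 0"
proof (rule hausdorff_measure_eq_0I[where 'i = "nat \<Rightarrow> int"])
  fix \<delta> \<epsilon> :: real assume \<delta>: "\<delta> > 0" and \<epsilon>: "\<epsilon> > 0"
  have "(\<lambda>n. 3 powr \<beta> * (1/2) ^ n) \<longlonglongrightarrow> 0"
    by (intro tendsto_mult_right_zero LIMSEQ_power_zero) simp
  then have small: "eventually (\<lambda>n. 3 powr \<beta> * (1/2) ^ n < \<epsilon>) sequentially"
    using \<epsilon> by (rule order_tendstoD)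
  have "eventually (\<lambda>n. ln (3 / \<delta>) \<le> real n) sequentially"
    using filterlim_real_sequentially unfolding filterlim_at_top by blast
  then have fine: "eventually (\<lambda>n. ln (3 / \<delta>) \<le> denom n) sequentially"
    using eventually_denom_ge[of 1] by eventually_elim simp
  obtain n where n: "numer n < \<beta>' * denom n" "2 * ln 2 / (\<beta> - \<beta>') * real n \<le> denom n"
    "3 powr \<beta> * (1/2) ^ n < \<epsilon>" "ln (3 / \<delta>) \<le> denom n"
    using frequently_ex[OF frequently_eventually_frequently[OF often
        eventually_conj[OF eventually_denom_ge eventually_conj[OF small fine]]]] by blast
  have "exp (- denom n) \<le> exp (ln (\<delta> / 3))" using n(4) \<delta> by (simp add: ln_div)
  then have "3 * exp (- denom n) \<le> \<delta>" using \<delta> by simp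
  then have small_sets: "bounded (rank_interval n w) \<and> diameter (rank_interval n w) \<le> \<delta>"
    if "w \<in> words n" for w
    using diameter_rank_interval_le[OF that] by (auto simp: rank_interval_def[of n w])
  have "(\<beta> - \<beta>') * (2 * ln 2 / (\<beta> - \<beta>') * real n) \<le> (\<beta> - \<beta>') * denom n"
    using n(2) assms(1) by (intro mult_left_mono) auto
  then have "2 * ln 2 * real n \<le> (\<beta> - \<beta>') * denom n" using assms(1) by simp
  then have "numer n + n * ln 2 - \<beta> * denom n \<le> - (n * ln 2)"
    using n(1) by (simp add: algebra_simps)
  then have "(\<Sum>w\<in>words n. diameter (rank_interval n w) powr \<beta>) \<le> 3 powr \<beta> * exp (- (n * ln 2))"
    using rank_intervals_powr_sum_le[of \<beta> n] assms(2)
    by (meson exp_le_cancel_iff mult_left_mono order.trans order.strict_implies_order powr_ge_zero)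
  also have "exp (- (n * ln 2)) = (1/2) ^ n"
    by (simp add: exp_minus exp_of_nat_mult inverse_eq_divide power_one_over)
  finally have "(\<Sum>w\<in>words n. diameter (rank_interval n w) powr \<beta>) \<le> \<epsilon>" using n(3) by linarith
  then show "\<exists>I (U :: (nat \<Rightarrow> int) \<Rightarrow> real set). finite I \<and> engel_set s t \<subseteq> (\<Union>i\<in>I. U i) \<and>
      (\<forall>i\<in>I. bounded (U i) \<and> diameter (U i) \<le> \<delta>) \<and> (\<Sum>i\<in>I. diameter (U i) powr \<beta>) \<le> \<epsilon>"
    using finite_words engel_set_subset_rank_intervals small_sets
    by (intro exI[of _ "words n"] exI[of _ "rank_interval n"]) blast
qed

section \<open>Separation of points with different digits\<close>

lemma engel_denom_pos: "w \<in> admissible \<Longrightarrow> (of_int (engel_denom w n) :: real) > 0"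
  unfolding engel_denom_def of_int_prod by (rule prod_pos) (use admissible_ge_3 in force)

lemma engel_denom_le: "w \<in> admissible \<Longrightarrow> (of_int (engel_denom w n) :: real) \<le> 2^n * sprod n"
proof -
  assume w: "w \<in> admissible"
  have "(of_int (engel_denom w n) :: real) = (\<Prod>k\<in>{1..n}. of_int (w k))" by (simp add: engel_denom_def)
  also have "\<dots> \<le> (\<Prod>k\<in>{1..n}. 2 * s k)"
  proof (rule prod_mono)
    fix k assume k: "k \<in> {1..n}"
    have "w k \<in> digits k" using w k by (auto simp: admissible_def)
    then show "0 \<le> (of_int (w k) :: real) \<and> of_int (w k) \<le> 2 * s k"
      using digits_le[of k "w k"] digits_ge_3[of k "w k"] k by auto
  qed
  also have "\<dots> = 2^n * sprod n" by (simp add: sprod_def prod.distrib)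
  finally show ?thesis .
qed

lemma engel_denom_mult_value_diff:
  assumes w: "w \<in> admissible" and v: "v \<in> admissible" and agree: "\<And>k. 1 \<le> k \<Longrightarrow> k \<le> n \<Longrightarrow> w k = v k"
  shows "of_int (engel_denom w n) * (engel_value w - engel_value v) = tail w n - tail v n"
  using engel_denom_mult_value[OF w, of n] engel_denom_mult_value[OF v, of n]
    engel_denom_cong[OF agree] engel_numer_cong[OF agree] by (simp add: algebra_simps)

text \<open>With \<open>a = w\<^sub>n\<^sub>+\<^sub>1 < v\<^sub>n\<^sub>+\<^sub>1\<close>: \<open>T\<^sup>n\<close> of the first point is \<open>(1 + T\<^sup>n\<^sup>+\<^sup>1)/a\<close>, that of the second at most \<open>1/a\<close>.\<close>
lemma tail_diff_gt:
  assumes w: "w \<in> admissible" and v: "v \<in> admissible" and lt: "w (Suc n) < v (Suc n)"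
  shows "tail w n - tail v n > 1 / (4 * s (Suc n) * s (Suc (Suc n)))"
proof -
  define a where "a = (of_int (w (Suc n)) :: real)"
  define b where "b = (of_int (v (Suc n)) :: real)"
  define c where "c = (of_int (w (Suc (Suc n))) :: real)"
  have a3: "a \<ge> 3" using admissible_ge_3[OF w, of "Suc n"] by (simp add: a_def)
  have ab: "a + 1 \<le> b" using lt by (simp add: a_def b_def)
  have a_le: "a \<le> 2 * s (Suc n)" using digits_le[of "Suc n" "w (Suc n)"] w by (auto simp: a_def admissible_def)
  have c_le: "c \<le> 2 * s (Suc (Suc n))"
    using digits_le[of "Suc (Suc n)" "w (Suc (Suc n))"] w by (auto simp: c_def admissible_def)
  have c3: "c \<ge> 3" using admissible_ge_3[OF w, of "Suc (Suc n)"] by (simp add: c_def)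
  have s1: "s (Suc n) > 0" "s (Suc (Suc n)) > 0" using s_pos by auto
  have lw: "tail w (Suc n) > 1 / c" using tail_gt[OF w, of "Suc n"] by (simp add: c_def)
  have "1 / c \<ge> 1 / (2 * s (Suc (Suc n)))" using c_le c3 by (intro divide_left_mono) auto
  with lw have lw2: "tail w (Suc n) > 1 / (2 * s (Suc (Suc n)))" by linarith
  have rw: "tail w n * a = 1 + tail w (Suc n)" using tail_rec[OF w, of n] by (simp add: a_def)
  have e1: "tail w n = (1 + tail w (Suc n)) / a" using rw a3 by (simp add: field_simps)
  have uv: "tail v n \<le> (b + 1) / b^2" using tail_le_sq[OF v, of n] by (simp add: b_def)
  have "(b + 1) / b^2 \<le> 1 / a"
  proof -
    have "b * 1 \<le> b * (b - a)" using ab a3 by (intro mult_left_mono) auto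
    then have "a * (b + 1) \<le> b^2" using ab a3 by (simp add: power2_eq_square algebra_simps)
    then show ?thesis using a3 ab by (simp add: divide_simps mult.commute)
  qed
  with uv have uv2: "tail v n \<le> 1 / a" by linarith
  have "tail w n - tail v n \<ge> (1 + tail w (Suc n)) / a - 1 / a" using e1 uv2 by linarith
  also have "(1 + tail w (Suc n)) / a - 1 / a = tail w (Suc n) / a" using a3 by (simp add: field_simps)
  finally have g: "tail w n - tail v n \<ge> tail w (Suc n) / a" .
  have h1: "tail w (Suc n) / a > (1 / (2 * s (Suc (Suc n)))) / a"
    using lw2 a3 by (intro divide_strict_right_mono) auto
  have h2: "(1 / (2 * s (Suc (Suc n)))) / a \<ge> (1 / (2 * s (Suc (Suc n)))) / (2 * s (Suc n))"
    using a_le a3 s1 by (intro divide_left_mono) auto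
  have h3: "(1 / (2 * s (Suc (Suc n)))) / (2 * s (Suc n)) = 1 / (4 * s (Suc n) * s (Suc (Suc n)))"
    by (simp add: field_simps)
  show ?thesis using g h1 h2 h3 by linarith
qed

lemma tail_diff_ge:
  assumes w: "w \<in> admissible" and v: "v \<in> admissible" and lt: "w (Suc n) < v (Suc n)"
  shows "of_int (v (Suc n) - w (Suc n)) - 1 \<le> 4 * s (Suc n)^2 * (tail w n - tail v n)"
proof -
  define a where "a = (of_int (w (Suc n)) :: real)"
  define b where "b = (of_int (v (Suc n)) :: real)"
  have a3: "a \<ge> 3" using admissible_ge_3[OF w, of "Suc n"] by (simp add: a_def)
  have ab: "a + 1 \<le> b" using lt by (simp add: a_def b_def)
  have a_le: "a \<le> 2 * s (Suc n)" using digits_le[of "Suc n" "w (Suc n)"] w by (auto simp: a_def admissible_def)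
  have b_le: "b \<le> 2 * s (Suc n)" using digits_le[of "Suc n" "v (Suc n)"] v by (auto simp: b_def admissible_def)
  have lw: "tail w n > 1 / a" using tail_gt[OF w, of n] by (simp add: a_def)
  have uv: "tail v n < 1 / (b - 1)" using tail_less[OF v, of n] by (simp add: b_def)
  have d: "tail w n - tail v n > 1 / a - 1 / (b - 1)" using lw uv by linarith
  have "1 / a - 1 / (b - 1) = (b - 1 - a) / (a * (b - 1))" using a3 ab by (simp add: field_simps)
  then have d2: "(b - 1 - a) < (a * (b - 1)) * (tail w n - tail v n)"
    using d a3 ab by (simp add: divide_simps mult.commute)
  have "a * (b - 1) \<le> (2 * s (Suc n)) * (2 * s (Suc n))"
    using a_le b_le a3 ab by (intro mult_mono) auto
  moreover have "tail w n - tail v n \<ge> 0"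
  proof -
    have "1 / (b - 1) \<le> 1 / a" using a3 ab by (intro divide_left_mono) auto
    then show ?thesis using d by linarith
  qed
  ultimately have "(a * (b - 1)) * (tail w n - tail v n)
      \<le> ((2 * s (Suc n)) * (2 * s (Suc n))) * (tail w n - tail v n)"
    by (intro mult_right_mono) auto
  then show ?thesis using d2 by (simp add: a_def b_def power2_eq_square algebra_simps)
qed

definition gap_scale :: "nat \<Rightarrow> real" where
  "gap_scale n = 1 / (4 * 2^n * sprod n * s (Suc n) * s (Suc (Suc n)))"

definition spread_scale :: "nat \<Rightarrow> real" where
  "spread_scale n = 4 * s (Suc n)^2 * 2^n * sprod n"

lemma engel_value_diff_bounds:
  assumes w: "w \<in> admissible" and v: "v \<in> admissible"
    and agree: "\<And>k. 1 \<le> k \<Longrightarrow> k \<le> n \<Longrightarrow> w k = v k" and lt: "w (Suc n) < v (Suc n)"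
  shows "gap_scale n < engel_value w - engel_value v"
    "of_int (v (Suc n) - w (Suc n)) \<le> spread_scale n * (engel_value w - engel_value v) + 1"
proof -
  define d where "d = engel_value w - engel_value v"
  have D: "(0::real) < of_int (engel_denom w n)" "of_int (engel_denom w n) \<le> 2^n * sprod n"
    using engel_denom_pos[OF w] engel_denom_le[OF w] by auto
  have tail_eq: "tail w n - tail v n = of_int (engel_denom w n) * d"
    using engel_denom_mult_value_diff[OF w v agree] by (simp add: d_def)
  have gt: "tail w n - tail v n > 1 / (4 * s (Suc n) * s (Suc (Suc n)))" by (rule tail_diff_gt[OF w v lt])
  moreover have "0 < 1 / (4 * s (Suc n) * s (Suc (Suc n)))" using s_pos by simp
  ultimately have "0 < of_int (engel_denom w n) * d" using tail_eq by linarith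
  then have "d > 0" using D by (simp add: zero_less_mult_iff)
  then have tail_le: "tail w n - tail v n \<le> 2^n * sprod n * d"
    unfolding tail_eq using D by (intro mult_right_mono) auto
  define c where "c = 1 / (4 * s (Suc n) * s (Suc (Suc n)))"
  have "c < d * (2^n * sprod n)" using gt tail_le unfolding c_def by (simp add: mult.commute)
  then have "c / (2^n * sprod n) < d" using sprod_pos[of n] by (simp add: pos_divide_less_eq)
  then show "gap_scale n < engel_value w - engel_value v"
    by (simp add: gap_scale_def c_def d_def field_simps)
  have "of_int (v (Suc n) - w (Suc n)) - 1 \<le> 4 * s (Suc n)^2 * (tail w n - tail v n)"
    by (rule tail_diff_ge[OF w v lt])
  also have "\<dots> \<le> 4 * s (Suc n)^2 * (2^n * sprod n * d)" using tail_le by (intro mult_left_mono) auto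
  finally show "of_int (v (Suc n) - w (Suc n)) \<le> spread_scale n * (engel_value w - engel_value v) + 1"
    by (simp add: spread_scale_def d_def algebra_simps)
qed

lemma gap_scale_pos: "gap_scale n > 0"
  unfolding gap_scale_def using sprod_pos[of n] s_pos[of "Suc n"] s_pos[of "Suc (Suc n)"] by simp

lemma gap_scale_antimono: "m \<le> n \<Longrightarrow> gap_scale n \<le> gap_scale m"
proof (induction n rule: dec_induct)
  case (step n)
  have "s (Suc (Suc (Suc n))) \<ge> 2" using s_ge_2 by simp
  then have "gap_scale (Suc n) \<le> gap_scale n"
    unfolding gap_scale_def sprod_Suc using sprod_pos[of n] s_pos[of "Suc n"] s_pos[of "Suc (Suc n)"]
    by (simp add: field_simps)
  then show ?case using step.IH by linarith
qed simp

section \<open>The uniform measure on digit sequences\<close>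

text \<open>Index \<open>0\<close> carries no digit; the dummy factor \<open>{0}\<close> lets the product range over all of \<open>nat\<close>.\<close>
definition digit_set :: "nat \<Rightarrow> int set" where
  "digit_set n = (if n = 0 then {0} else digits n)"

definition digit_measure :: "nat \<Rightarrow> int measure" where
  "digit_measure n = uniform_count_measure (digit_set n)"

lemma prob_space_digit_measure: "prob_space (digit_measure n)"
  unfolding digit_measure_def
  by (rule prob_space_uniform_count_measure) (use digits_nonempty in \<open>auto simp: digit_set_def\<close>)

sublocale digit_seq: product_prob_space digit_measure UNIV
  unfolding product_prob_space_def product_prob_space_axioms_def product_sigma_finite_def
  using prob_space_digit_measure prob_space_imp_sigma_finite by blast

abbreviation seq_measure :: "(nat \<Rightarrow> int) measure" where
  "seq_measure \<equiv> PiM UNIV digit_measure"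

lemma space_seq_measure: "space seq_measure = {w. \<forall>n. w n \<in> digit_set n}"
  by (auto simp: space_PiM digit_measure_def space_uniform_count_measure PiE_def Pi_def)

lemma space_seq_measure_subset_admissible: "space seq_measure \<subseteq> admissible"
  by (auto simp: space_seq_measure admissible_def digit_set_def)

lemma space_seq_measure_0: "w \<in> space seq_measure \<Longrightarrow> w 0 = 0"
  by (auto simp: space_seq_measure digit_set_def dest: spec[of _ 0])

definition cylinder :: "(nat \<Rightarrow> int) \<Rightarrow> nat \<Rightarrow> int set \<Rightarrow> (nat \<Rightarrow> int) set" where
  "cylinder w n A = {v \<in> space seq_measure. (\<forall>k\<in>{1..n}. v k = w k) \<and> v (Suc n) \<in> A}"

lemma cylinder_sets_emeasure:
  assumes w: "w \<in> admissible" and A: "A \<subseteq> digits (Suc n)"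
  shows "cylinder w n A \<in> sets seq_measure"
    "emeasure seq_measure (cylinder w n A) = ennreal (real (card A) / nwords (Suc n))"
proof -
  define X where "X k = (if k = Suc n then A else {w k})" for k
  have X: "X k \<subseteq> digit_set k" if "k \<in> {1..Suc n}" for k
    using that A w by (auto simp: X_def digit_set_def admissible_def)
  have cyl: "cylinder w n A = prod_emb UNIV digit_measure {1..Suc n} (PiE {1..Suc n} X)"
    by (auto simp: cylinder_def prod_emb_def space_PiM PiE_def Pi_def X_def)
  show "cylinder w n A \<in> sets seq_measure"
    unfolding cyl using X by (intro sets_PiM_I) (auto simp: digit_measure_def sets_uniform_count_measure)
  have "emeasure seq_measure (cylinder w n A) = (\<Prod>k\<in>{1..Suc n}. emeasure (digit_measure k) (X k))"
    unfolding cyl using X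
    by (intro digit_seq.emeasure_PiM_emb) (auto simp: digit_measure_def sets_uniform_count_measure)
  also have "\<dots> = (\<Prod>k\<in>{1..Suc n}. ennreal (real (card (X k)) / real (card (digits k))))"
  proof (rule prod.cong[OF refl])
    fix k assume k: "k \<in> {1..Suc n}"
    have "emeasure (digit_measure k) (X k) = ennreal (measure (digit_measure k) (X k))"
      using prob_space_digit_measure[of k] by (simp add: prob_space_def finite_measure.emeasure_eq_measure)
    also have "measure (digit_measure k) (X k) = real (card (X k)) / real (card (digit_set k))"
      unfolding digit_measure_def
      by (rule measure_uniform_count_measure) (use X[OF k] in \<open>auto simp: digit_set_def\<close>)
    finally show "emeasure (digit_measure k) (X k) = ennreal (real (card (X k)) / real (card (digits k)))"
      using k by (simp add: digit_set_def)
  qed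
  also have "\<dots> = ennreal (\<Prod>k\<in>{1..Suc n}. real (card (X k)) / real (card (digits k)))"
    by (rule prod_ennreal) simp
  also have "(\<Prod>k\<in>{1..Suc n}. real (card (X k)) / real (card (digits k))) = real (card A) / nwords (Suc n)"
    by (simp add: prod.nat_ivl_Suc' X_def nwords_def prod_dividef)
  finally show "emeasure seq_measure (cylinder w n A) = ennreal (real (card A) / nwords (Suc n))" .
qed

lemma small_cylinder:
  assumes w: "w \<in> space seq_measure" and "\<eta> > 0"
  shows "\<exists>S\<in>sets seq_measure. w \<in> S \<and> emeasure seq_measure S \<le> ennreal \<eta>"
proof -
  obtain m where m: "(1/2) ^ m < \<eta>" using real_arch_pow_inv[OF \<open>\<eta> > 0\<close>] by force
  have wa: "w \<in> admissible" using w space_seq_measure_subset_admissible by blast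
  have A: "{w (Suc m)} \<subseteq> digits (Suc m)" using wa by (auto simp: admissible_def)
  have "1 / nwords (Suc m) \<le> 1 / 2 ^ Suc m"
    using nwords_ge_pow_2[of "Suc m"] nwords_pos[of "Suc m"] by (intro divide_left_mono) auto
  also have "\<dots> \<le> (1/2) ^ m" by (simp add: power_one_over divide_le_eq)
  finally have "emeasure seq_measure (cylinder w m {w (Suc m)}) \<le> ennreal \<eta>"
    unfolding cylinder_sets_emeasure(2)[OF wa A] using m by (intro ennreal_leI) simp
  moreover have "w \<in> cylinder w m {w (Suc m)}" using w by (simp add: cylinder_def)
  ultimately show ?thesis using cylinder_sets_emeasure(1)[OF wa A] by blast
qed

text \<open>\<open>numer n / denom n > \<alpha>\<close>, with room to absorb the factors \<open>2\<^sup>n\<close> lost in the counting.\<close>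
definition ample :: "real \<Rightarrow> nat \<Rightarrow> bool" where
  "ample \<alpha> n \<longleftrightarrow> \<alpha> * denom n + (2 * real n + 4) * ln 2 \<le> numer n"

lemma inverse_nwords_le_gap_scale_powr:
  assumes "0 < \<alpha>" "\<alpha> \<le> 1" and "ample \<alpha> (Suc n)"
  shows "1 / nwords (Suc n) \<le> gap_scale n powr \<alpha>"
proof -
  have "1 / gap_scale n = 2 ^ (n + 2) * sprod (Suc (Suc n))"
    by (simp add: gap_scale_def sprod_Suc power_add)
  then have "ln (1 / gap_scale n) = ln (2 ^ (n + 2)) + ln (sprod (Suc (Suc n)))"
    using sprod_pos by (simp add: ln_mult_pos)
  also have "ln ((2::real) ^ (n + 2)) = (real n + 2) * ln 2" by (subst ln_realpow) auto
  also have "(real n + 2) * ln 2 + ln (sprod (Suc (Suc n))) \<le> (real n + 2) * ln 2 + denom (Suc n)"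
    using ln_sprod_Suc_le_denom[of "Suc n"] by linarith
  finally have "\<alpha> * ln (1 / gap_scale n) \<le> \<alpha> * ((real n + 2) * ln 2 + denom (Suc n))"
    using assms(1) by (intro mult_left_mono) auto
  also have "\<dots> = \<alpha> * ((real n + 2) * ln 2) + \<alpha> * denom (Suc n)" by (rule distrib_left)
  also have "\<dots> \<le> (real n + 2) * ln 2 + \<alpha> * denom (Suc n)"
    using assms(2) mult_right_mono[of \<alpha> 1 "(real n + 2) * ln 2"] by simp
  also have "\<dots> \<le> numer (Suc n) - Suc n * ln 2"
    using assms(3) ln_gt_zero[of "2::real"] unfolding ample_def of_nat_Suc
    by (simp only: algebra_simps) linarith
  also have "\<dots> \<le> ln (nwords (Suc n))" by (rule ln_nwords_bounds(1))
  finally have "- ln (nwords (Suc n)) \<le> \<alpha> * ln (gap_scale n)"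
    using gap_scale_pos[of n] by (simp add: ln_div)
  then have "exp (- ln (nwords (Suc n))) \<le> exp (\<alpha> * ln (gap_scale n))" by simp
  then show ?thesis
    using nwords_pos gap_scale_pos[of n] by (simp add: exp_minus inverse_eq_divide powr_def mult.commute)
qed

lemma spread_scale_powr_le:
  assumes "0 < \<alpha>" "\<alpha> \<le> 1" and "ample \<alpha> n"
  shows "(2 * spread_scale n) powr \<alpha> \<le> nwords n * real (card (digits (Suc n))) powr \<alpha>"
proof -
  have c: "real (card (digits (Suc n))) > 0" using card_digits_ge_2[of "Suc n"] by simp
  have "2 * spread_scale n = 2 ^ (n + 3) * s (Suc n)^2 * sprod n" by (simp add: spread_scale_def power_add)
  then have "ln (2 * spread_scale n) = ln (2 ^ (n + 3)) + ln (s (Suc n)^2) + ln (sprod n)"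
    using sprod_pos s_pos[of "Suc n"] by (simp add: ln_mult_pos)
  also have "ln ((2::real) ^ (n + 3)) = (real n + 3) * ln 2" by (subst ln_realpow) auto
  also have "ln (s (Suc n)^2) = 2 * ln (s (Suc n))" using s_pos[of "Suc n"] by (simp add: ln_realpow)
  finally have "ln (2 * spread_scale n) - ln (real (card (digits (Suc n)))) \<le> denom n + (real n + 4) * ln 2"
    using ln_card_digits_bounds(1)[of "Suc n"] denom_eq[of n] by (simp add: algebra_simps)
  then have "\<alpha> * (ln (2 * spread_scale n) - ln (real (card (digits (Suc n)))))
      \<le> \<alpha> * (denom n + (real n + 4) * ln 2)"
    using assms(1) by (intro mult_left_mono) auto
  also have "\<dots> = \<alpha> * denom n + \<alpha> * ((real n + 4) * ln 2)" by (rule distrib_left)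
  also have "\<dots> \<le> \<alpha> * denom n + (real n + 4) * ln 2"
    using assms(2) mult_right_mono[of \<alpha> 1 "(real n + 4) * ln 2"] by simp
  also have "\<dots> \<le> numer n - n * ln 2" using assms(3) by (simp add: ample_def algebra_simps)
  also have "\<dots> \<le> ln (nwords n)" by (rule ln_nwords_bounds(1))
  finally have "\<alpha> * ln (2 * spread_scale n) \<le> ln (nwords n) + \<alpha> * ln (real (card (digits (Suc n))))"
    by (simp add: algebra_simps)
  then have "exp (\<alpha> * ln (2 * spread_scale n)) \<le> exp (ln (nwords n) + \<alpha> * ln (real (card (digits (Suc n)))))"
    by simp
  moreover have "2 * spread_scale n > 0" using sprod_pos s_pos[of "Suc n"] by (simp add: spread_scale_def)
  ultimately show ?thesis
    using nwords_pos[of n] c digits_nonempty[of "Suc n"] by (simp add: exp_add powr_def mult.commute)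
qed

text \<open>The mass of a cylinder over \<open>x\<close> values of digit \<open>n + 1\<close>, at scale \<open>r \<ge> gap_scale n\<close>.\<close>
lemma digit_count_div_nwords_le:
  assumes "0 < \<alpha>" "\<alpha> \<le> 1" and "ample \<alpha> n" "ample \<alpha> (Suc n)" and r: "gap_scale n \<le> r"
    and x: "0 \<le> x" "x \<le> real (card (digits (Suc n)))" "x \<le> spread_scale n * r + 2"
  shows "x / nwords (Suc n) \<le> 4 * r powr \<alpha>"
proof (cases "spread_scale n * r \<le> 2")
  case True
  have "x / nwords (Suc n) \<le> 4 * (1 / nwords (Suc n))"
    using True x nwords_pos[of "Suc n"] by (simp add: divide_right_mono)
  also have "\<dots> \<le> 4 * gap_scale n powr \<alpha>"
    using inverse_nwords_le_gap_scale_powr[OF assms(1,2,4)] by simp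
  also have "\<dots> \<le> 4 * r powr \<alpha>" using r gap_scale_pos[of n] assms(1) by (simp add: powr_mono2)
  finally show ?thesis .
next
  case False
  let ?c = "real (card (digits (Suc n)))"
  have c: "?c > 0" using card_digits_ge_2[of "Suc n"] by simp
  have rp: "r > 0" using gap_scale_pos[of n] r by linarith
  have "x \<le> ?c powr (1 - \<alpha>) * (2 * spread_scale n * r) powr \<alpha>"
    using x False assms(1,2) by (intro le_powr_interpolate) auto
  also have "\<dots> = ?c / ?c powr \<alpha> * ((2 * spread_scale n) powr \<alpha> * r powr \<alpha>)"
    using c rp False by (simp add: powr_diff powr_mult)
  also have "\<dots> \<le> ?c / ?c powr \<alpha> * ((nwords n * ?c powr \<alpha>) * r powr \<alpha>)"
    using spread_scale_powr_le[OF assms(1-3)] c by (intro mult_left_mono mult_right_mono) auto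
  also have "\<dots> = nwords (Suc n) * r powr \<alpha>" using c by (simp add: nwords_Suc)
  finally have "x / nwords (Suc n) \<le> r powr \<alpha>"
    using nwords_pos[of "Suc n"] by (simp add: divide_le_eq mult.commute)
  then show ?thesis using powr_ge_zero[of r \<alpha>] by linarith
qed

lemma card_digit_image_le:
  assumes X: "X \<subseteq> admissible" "X \<noteq> {}"
    and agree: "\<forall>w\<in>X. \<forall>v\<in>X. \<forall>k\<in>{1..n}. w k = v k"
    and close: "\<forall>w\<in>X. \<forall>v\<in>X. engel_value w - engel_value v \<le> r" and "0 \<le> r"
  shows "real (card ((\<lambda>w. w (Suc n)) ` X)) \<le> spread_scale n * r + 2"
proof -
  define A where "A = (\<lambda>w. w (Suc n)) ` X"
  have "A \<subseteq> digits (Suc n)" using X(1) by (auto simp: A_def admissible_def)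
  then have fin: "finite A" by (rule finite_subset) simp
  have ne: "A \<noteq> {}" using X(2) by (simp add: A_def)
  obtain u where u: "u \<in> X" "u (Suc n) = Min A"
    using Min_in[OF fin ne] by (auto simp: A_def)
  obtain v where v: "v \<in> X" "v (Suc n) = Max A"
    using Max_in[OF fin ne] by (auto simp: A_def)
  have spread: "spread_scale n \<ge> 0" using sprod_pos[of n] by (simp add: spread_scale_def)
  have diff: "of_int (v (Suc n) - u (Suc n)) \<le> spread_scale n * r + 1"
  proof (cases "u (Suc n) < v (Suc n)")
    case True
    have "u \<in> admissible" "v \<in> admissible" using X(1) u(1) v(1) by auto
    then have "of_int (v (Suc n) - u (Suc n)) \<le> spread_scale n * (engel_value u - engel_value v) + 1"
      using agree u(1) v(1) True by (intro engel_value_diff_bounds(2)) auto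
    also have "\<dots> \<le> spread_scale n * r + 1"
    proof -
      have "engel_value u - engel_value v \<le> r" using close u(1) v(1) by blast
      then show ?thesis using spread by (simp add: mult_left_mono)
    qed
    finally show ?thesis .
  next
    case False
    moreover have "spread_scale n * r \<ge> 0" using spread \<open>0 \<le> r\<close> by simp
    ultimately show ?thesis by linarith
  qed
  have "A \<subseteq> {u (Suc n) .. v (Suc n)}"
    unfolding u(2) v(2) using Min_le[OF fin] Max_ge[OF fin]
    by (intro subsetI atLeastAtMost_iff[THEN iffD2] conjI)
  then have "card A \<le> nat (v (Suc n) - u (Suc n) + 1)"
    using card_mono[of "{u (Suc n) .. v (Suc n)}" A] by simp
  moreover have "card A > 0" using fin ne by (simp add: card_gt_0_iff)
  ultimately have "int (card A) \<le> v (Suc n) - u (Suc n) + 1" by linarith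
  then have "real (card A) \<le> of_int (v (Suc n) - u (Suc n)) + 1"
    using of_int_le_iff[where 'a = real] by fastforce
  with diff show ?thesis unfolding A_def[symmetric] by linarith
qed

text \<open>Two admissible sequences in a set of diameter \<open>r < gap_scale n\<^sub>0\<close> first differ at some place
  \<open>n + 1\<close> with \<open>gap_scale n \<le> r\<close>; the set then lies in a cylinder of rank \<open>n\<close> over few values of digit \<open>n + 1\<close>.\<close>
lemma cylinder_cover_le:
  assumes \<alpha>: "0 < \<alpha>" "\<alpha> \<le> 1" and ample: "\<forall>m\<ge>n0. ample \<alpha> m"
    and X: "X \<subseteq> space seq_measure" "w \<in> X" "v \<in> X" "w \<noteq> v"
    and close: "\<forall>w\<in>X. \<forall>v\<in>X. engel_value w - engel_value v \<le> r" and "r < gap_scale n0"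
  shows "\<exists>S\<in>sets seq_measure. X \<subseteq> S \<and> emeasure seq_measure S \<le> ennreal (4 * r powr \<alpha>)"
proof -
  have X_adm: "X \<subseteq> admissible" using X(1) space_seq_measure_subset_admissible by blast
  have "0 \<le> r" using close X(2) by fastforce
  have "\<forall>w\<in>X. w 0 = 0" using X(1) space_seq_measure_0 by blast
  then obtain n where agree: "\<forall>w\<in>X. \<forall>v\<in>X. \<forall>k\<in>{1..n}. w k = v k"
    and "\<exists>w\<in>X. \<exists>v\<in>X. w (Suc n) \<noteq> v (Suc n)" using X(2-4) by (rule first_difference)
  then obtain w v where wv: "w \<in> X" "v \<in> X" "w (Suc n) < v (Suc n)" by (force simp: neq_iff)
  have "gap_scale n < engel_value w - engel_value v"
    using X_adm wv agree by (intro engel_value_diff_bounds(1)) auto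
  then have "gap_scale n \<le> r" using close wv by fastforce
  then have "n0 \<le> n" using gap_scale_antimono[of n n0] \<open>r < gap_scale n0\<close> by linarith
  define A where "A = (\<lambda>w. w (Suc n)) ` X"
  have A: "A \<subseteq> digits (Suc n)" using X_adm by (auto simp: A_def admissible_def)
  have "real (card A) \<le> spread_scale n * r + 2"
    unfolding A_def using X_adm wv(1) agree close \<open>0 \<le> r\<close> by (intro card_digit_image_le) auto
  moreover have "real (card A) \<le> real (card (digits (Suc n)))" using card_mono[OF _ A] by simp
  ultimately have "real (card A) / nwords (Suc n) \<le> 4 * r powr \<alpha>"
    using ample \<open>n0 \<le> n\<close> \<open>gap_scale n \<le> r\<close> by (intro digit_count_div_nwords_le[OF \<alpha>]) auto
  moreover have wa: "w \<in> admissible" using X_adm wv(1) by blast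
  ultimately have "emeasure seq_measure (cylinder w n A) \<le> ennreal (4 * r powr \<alpha>)"
    using cylinder_sets_emeasure(2)[OF _ A] by (simp add: ennreal_leI)
  moreover have "X \<subseteq> cylinder w n A" using agree wv(1) X(1) by (auto simp: cylinder_def A_def)
  ultimately show ?thesis using cylinder_sets_emeasure(1)[OF wa A] by blast
qed

lemma seq_measure_preimage_le:
  assumes \<alpha>: "0 < \<alpha>" "\<alpha> \<le> 1" and ample: "\<forall>m\<ge>n0. ample \<alpha> m"
    and U: "bounded U" "diameter U < gap_scale n0" and \<eta>: "\<eta> > 0"
  shows "\<exists>S\<in>sets seq_measure. {w \<in> space seq_measure. engel_value w \<in> U} \<subseteq> S \<and>
    emeasure seq_measure S \<le> ennreal (4 * diameter U powr \<alpha> + \<eta>)"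
proof -
  define X where "X = {w \<in> space seq_measure. engel_value w \<in> U}"
  have bound: "ennreal a \<le> ennreal (4 * diameter U powr \<alpha> + \<eta>)"
    if "a \<le> \<eta> \<or> a \<le> 4 * diameter U powr \<alpha>" for a
    using that \<eta> powr_ge_zero[of "diameter U" \<alpha>] by (intro ennreal_leI) linarith
  consider "X = {}" | w where "X = {w}" | w v where "w \<in> X" "v \<in> X" "w \<noteq> v" by blast
  then show ?thesis
  proof cases
    case 1
    then show ?thesis unfolding X_def by (intro bexI[of _ "{}"]) auto
  next
    case (2 w)
    then obtain S where "S \<in> sets seq_measure" "w \<in> S" "emeasure seq_measure S \<le> ennreal \<eta>"
      using small_cylinder[OF _ \<eta>, of w] by (auto simp: X_def)
    then show ?thesis using 2 bound[of \<eta>] unfolding X_def[symmetric] by (auto intro: order_trans)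
  next
    case (3 w v)
    have "engel_value w - engel_value v \<le> diameter U" if "w \<in> X" "v \<in> X" for w v
      using diameter_bounded_bound[OF U(1), of "engel_value w" "engel_value v"] that
      by (simp add: X_def dist_real_def)
    then obtain S where "S \<in> sets seq_measure" "X \<subseteq> S"
      "emeasure seq_measure S \<le> ennreal (4 * diameter U powr \<alpha>)"
      using cylinder_cover_le[OF \<alpha> ample _ 3 _ U(2)] by (force simp: X_def)
    then show ?thesis
      using bound[of "4 * diameter U powr \<alpha>"] unfolding X_def[symmetric] by (auto intro: order_trans)
  qed
qed

lemma hausdorff_measure_engel_set_neq_0:
  assumes "0 < \<alpha>" "\<alpha> \<le> 1" and "\<forall>m\<ge>n0. ample \<alpha> m"
  shows "hausdorff_measure \<alpha> (engel_set s t) \<noteq> 0"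
proof (rule hausdorff_measure_neq_0_by_mass_distribution)
  show "prob_space seq_measure" by (rule digit_seq.prob_space_axioms)
  show "engel_value w \<in> engel_set s t" if "w \<in> space seq_measure" for w
    using that space_seq_measure_subset_admissible engel_value_in_engel_set by blast
  show "gap_scale n0 / 2 > 0" "(4::real) > 0" using gap_scale_pos[of n0] by auto
  fix U :: "real set" and \<eta> :: real
  assume "bounded U" "diameter U \<le> gap_scale n0 / 2" "\<eta> > 0"
  then show "\<exists>S\<in>sets seq_measure. {w \<in> space seq_measure. engel_value w \<in> U} \<subseteq> S \<and>
      emeasure seq_measure S \<le> ennreal (4 * diameter U powr \<alpha> + \<eta>)"
    using gap_scale_pos[of n0] assms by (intro seq_measure_preimage_le) auto
qed

section \<open>The dimension formula\<close>

definition dim_ratio :: "nat \<Rightarrow> ereal" where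
  "dim_ratio n = ereal (numer n / denom n)"

lemma dim_ratio_bounds: "0 \<le> dim_ratio n" "dim_ratio n \<le> 1"
  using numer_nonneg[of n] denom_pos[of n] numer_le_denom[of n] by (auto simp: dim_ratio_def)

lemma hausdorff_measure_engel_set_eq_0_above:
  assumes l: "liminf dim_ratio = ereal l" and "l < \<beta>" "0 < \<beta>"
  shows "hausdorff_measure \<beta> (engel_set s t) = 0"
proof -
  define \<beta>' where "\<beta>' = (l + \<beta>) / 2"
  have \<beta>': "l < \<beta>'" "\<beta>' < \<beta>" using assms(2) by (auto simp: \<beta>'_def)
  have "frequently (\<lambda>n. dim_ratio n < ereal \<beta>') sequentially"
  proof (rule ccontr)
    assume "\<not> frequently (\<lambda>n. dim_ratio n < ereal \<beta>') sequentially"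
    then have "eventually (\<lambda>n. ereal \<beta>' \<le> dim_ratio n) sequentially"
      by (simp add: not_frequently not_less)
    then have "ereal \<beta>' \<le> liminf dim_ratio" by (rule Liminf_bounded)
    then show False using \<beta>'(1) l by simp
  qed
  then have "frequently (\<lambda>n. numer n < \<beta>' * denom n) sequentially"
    using denom_pos by (simp add: dim_ratio_def pos_divide_less_eq)
  with \<beta>'(2) \<open>0 < \<beta>\<close> show ?thesis by (intro hausdorff_measure_engel_set_eq_0)
qed

lemma hausdorff_measure_engel_set_neq_0_below:
  assumes l: "liminf dim_ratio = ereal l" and "0 < \<alpha>" "\<alpha> < l"
  shows "hausdorff_measure \<alpha> (engel_set s t) \<noteq> 0"
proof -
  define \<alpha>' where "\<alpha>' = (\<alpha> + l) / 2"
  have \<alpha>': "\<alpha> < \<alpha>'" "ereal \<alpha>' < liminf dim_ratio" using assms(3) l by (auto simp: \<alpha>'_def)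
  have "liminf dim_ratio \<le> 1" by (rule Liminf_le) (auto simp: dim_ratio_bounds)
  then have "\<alpha> \<le> 1" using l assms(3) by simp
  have "eventually (\<lambda>m. ereal \<alpha>' < dim_ratio m) sequentially" using \<alpha>'(2) by (rule less_LiminfD)
  moreover have "eventually (\<lambda>m. 6 * ln 2 / (\<alpha>' - \<alpha>) * real m \<le> denom m \<and> 1 \<le> m) sequentially"
    by (intro eventually_conj eventually_denom_ge eventually_ge_at_top)
  ultimately have "eventually (ample \<alpha>) sequentially"
  proof eventually_elim
    case (elim m)
    have "\<alpha>' * denom m \<le> numer m"
      using elim(1) denom_pos[of m] by (simp add: dim_ratio_def pos_less_divide_eq)
    moreover have "(\<alpha>' - \<alpha>) * (6 * ln 2 / (\<alpha>' - \<alpha>) * real m) \<le> (\<alpha>' - \<alpha>) * denom m"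
      using elim(2) \<alpha>'(1) by (intro mult_left_mono) auto
    then have "6 * ln 2 * real m \<le> (\<alpha>' - \<alpha>) * denom m" using \<alpha>'(1) by simp
    moreover have "(2 * real m + 4) * ln 2 \<le> 6 * ln 2 * real m" using elim(2) by (simp add: algebra_simps)
    ultimately show ?case unfolding ample_def by (simp only: algebra_simps)
  qed
  then obtain n0 where "\<forall>m\<ge>n0. ample \<alpha> m" unfolding eventually_sequentially by blast
  then show ?thesis using assms(2) \<open>\<alpha> \<le> 1\<close> by (intro hausdorff_measure_engel_set_neq_0) auto
qed

theorem hausdorff_dim_engel_set: "ereal (hausdorff_dim (engel_set s t)) = liminf dim_ratio"
proof -
  have "0 \<le> liminf dim_ratio" "liminf dim_ratio \<le> 1"
    by (auto intro: Liminf_bounded Liminf_le simp: dim_ratio_bounds)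
  then obtain l where l: "liminf dim_ratio = ereal l" "0 \<le> l" by (cases "liminf dim_ratio") auto
  have "hausdorff_dim (engel_set s t) = l"
    using l hausdorff_measure_engel_set_eq_0_above[OF l(1)] hausdorff_measure_engel_set_neq_0_below[OF l(1)]
    by (intro hausdorff_dim_eqI) auto
  with l show ?thesis by simp
qed

end

text \<open>The positivity hypothesis \<open>pos\<close> is implied by \<open>h1\<close>.\<close>
theorem lemmaA:
  fixes s t :: "nat \<Rightarrow> real"
  assumes pos: "\<forall>n\<ge>1. s n > 0 \<and> t n > 0"
    and h1: "\<forall>n\<ge>1. s n \<ge> t n \<and> t n \<ge> 2"
    and h2: "\<forall>n\<ge>1. s (n + 1) \<ge> s n + t n"
    and h3: "filterlim s at_top sequentially"
  shows "ereal (hausdorff_dim (engel_set s t)) =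
    liminf (\<lambda>n. ereal ((\<Sum>k=1..n. ln (t k)) /
       ((\<Sum>k=1..n+1. ln (s k)) + ln (s (n + 1)) - ln (t (n + 1)))))"
proof -
  interpret engel_growth s t using h1 h2 h3 by unfold_locales
  show ?thesis using hausdorff_dim_engel_set unfolding dim_ratio_def numer_def denom_def .
qed

end
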